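(* Let $\mathbf{E}\subseteq\mathbf{A}$ be finite symmetric integral relation algebras such that $\mathbf{A}$ is a special extension of $\mathbf{E}$, and let $\mathbf{B}$ be the subalgebra of $\mathbf{C}_{\mathbf{E}}(\mathbf{A})$ generated by the set of atoms of $\mathbf{C}_{\mathbf{E}}(\mathbf{A})$. Then: (i) $\mathbf{B}$ is countable, atomic, symmetric, integral, and generated by its atoms; (ii) $\mathbf{C}_{\mathbf{E}}(\mathbf{A})$ and $\mathbf{B}$ have the same atom structure; (iii) $\mathbf{C}_{\mathbf{E}}(\mathbf{A})$ is isomorphic to the complex algebra of the atom structure of $\mathbf{B}$; (iv) $\mathbf{C}_{\mathbf{E}}(\mathbf{A})$ is the completion of $\mathbf{B}$; (v) there are subalgebras $\mathbf{E}'\subseteq\mathbf{A}'\subseteq\mathbf{C}_{\mathbf{E}}(\mathbf{A})$ with $\mathbf{E}'\cong\mathbf{E}$ and $\mathbf{A}'\cong\mathbf{A}$, namely the images of $\mathbf{E}$ and $\mathbf{A}$ under $a\mapsto J(a,0)$; (vi) every finitely generated subalgebra of $\mathbf{B}$ is finite; (vii) every element of $\mathbf{B}$ is almost the same as an element of $\mathbf{E}'$.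
   Context: Relation algebras are in the sense of Tarski; $1'$ identity, $0'$ diversity element (complement of $1'$), $;$ relative product, $\overline{x}$ Boolean complement; integral means $1'$ is an atom, symmetric means $x^{\smile}=x$ for all $x$; a diversity atom is an atom below $0'$. $\mathsf{NA}$ denotes the class of non-associative relation algebras (all relation algebra axioms except associativity of $;$). Special extension: for finite symmetric integral relation algebras $\mathbf{E}\subseteq\mathbf{A}$, $\mathbf{A}$ is a special extension of $\mathbf{E}$ if for all diversity atoms $a,b,c$ of $\mathbf{E}$: (1) if not $a=b=c$ and $a;b\ge c$, then $x;y\ge c$ whenever $x,y$ are atoms of $\mathbf{A}$ with $x\le a$, $y\le b$; (2) if $a;a\ge a$ then $x;y\cdot a\neq 0$ whenever $x,y$ are atoms of $\mathbf{A}$ with $x,y\le a$. The algebra $\mathbf{C}_{\mathbf{E}}(\mathbf{A})$: for each atom $x$ of $\mathbf{A}$ let $c(x)$ be the atom of $\mathbf{E}$ with $x\le c(x)$. Let $T\subseteq\omega^3$ be given by $T(i,j,k)$ iff $(i\le j=k)$ or $(j\le k=i)$ or $(k\le i=j)$. Let $At=\{1'\}\cup\{x^{(i)}: x \text{ a diversity atom of }\mathbf{A}, i\in\omega\}$ (distinct formal symbols). Let $C\subseteq At^3$ consist of all permutations of the triples $(1',1',1')$, $(1',x^{(i)},x^{(i)})$, and $(x^{(i)},y^{(j)},z^{(k)})$ for diversity atoms $x,y,z$ of $\mathbf{A}$ and $i,j,k\in\omega$ such that $x;y\ge z$ in $\mathbf{A}$ and, if $c(x)=c(y)=c(z)$,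 then $T(i,j,k)$. $\mathbf{C}_{\mathbf{E}}(\mathbf{A})$ is the algebra of all subsets of $At$ with set-theoretic Boolean operations, identity $\{1'\}$, converse the identity map, and $X;Y=\{w:\exists u\in X,\exists v\in Y,(u,v,w)\in C\}$; it is a complete atomic member of $\mathsf{NA}$ whose atoms are (identified with) the elements of $At$. For $a\in\mathbf{A}$ and $n\in\omega$, $J(a,n)$ is the join of all $x^{(i)}$ with $x$ a diversity atom of $\mathbf{A}$, $x\le a$, $n\le i$, together with $1'$ if $1'\le a$. Atom structure and complex algebra: the atom structure of an atomic algebra in $\mathsf{NA}$ is $\langle At,C,{}^{\smile},I\rangle$ with $C=\{(x,y,z):x;y\ge z\}$ on atoms and $I$ the atoms below $1'$; its complex algebra is the algebra of subsets of the atoms with $X;Y=\{z:\exists x\in X,\exists y\in Y,(x,y,z)\in C\}$, etc. A completion of $\mathbf{B}$ is a complete algebra $\mathbf{C}$ with $\mathbf{B}$ a dense subalgebra (below every nonzero element of $\mathbf{C}$ lies a nonzero element of $\mathbf{B}$). Two elements of an atomic algebra are almost the same if their symmetric difference is the join of finitely many atoms. *)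

theory Defs
  imports Main "HOL-Library.Countable_Set"
begin

record 'a ra =
  rcar   :: "'a set"
  rjoin  :: "'a \<Rightarrow> 'a \<Rightarrow> 'a"
  rmeet  :: "'a \<Rightarrow> 'a \<Rightarrow> 'a"
  rcompl :: "'a \<Rightarrow> 'a"
  rzero  :: "'a"
  rone   :: "'a"
  rid    :: "'a"
  rconv  :: "'a \<Rightarrow> 'a"
  rcomp  :: "'a \<Rightarrow> 'a \<Rightarrow> 'a"

definition leq :: "('a, 'm) ra_scheme \<Rightarrow> 'a \<Rightarrow> 'a \<Rightarrow> bool" where
  "leq R x y \<longleftrightarrow> rjoin R x y = y"

definition is_BA :: "('a, 'm) ra_scheme \<Rightarrow> bool" where
  "is_BA R \<longleftrightarrow>
    rzero R \<in> rcar R \<and> rone R \<in> rcar R \<and>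
    (\<forall>x\<in>rcar R. \<forall>y\<in>rcar R. rjoin R x y \<in> rcar R \<and> rmeet R x y \<in> rcar R) \<and>
    (\<forall>x\<in>rcar R. rcompl R x \<in> rcar R) \<and>
    (\<forall>x\<in>rcar R. \<forall>y\<in>rcar R. rjoin R x y = rjoin R y x \<and> rmeet R x y = rmeet R y x) \<and>
    (\<forall>x\<in>rcar R. \<forall>y\<in>rcar R. \<forall>z\<in>rcar R.
        rjoin R (rjoin R x y) z = rjoin R x (rjoin R y z) \<and>
        rmeet R (rmeet R x y) z = rmeet R x (rmeet R y z) \<and>
        rmeet R x (rjoin R y z) = rjoin R (rmeet R x y) (rmeet R x z)) \<and>
    (\<forall>x\<in>rcar R. \<forall>y\<in>rcar R. rjoin R x (rmeet R x y) = x \<and> rmeet R x (rjoin R x y) = x) \<and>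
    (\<forall>x\<in>rcar R. rjoin R x (rcompl R x) = rone R \<and> rmeet R x (rcompl R x) = rzero R)"

definition is_NA :: "('a, 'm) ra_scheme \<Rightarrow> bool" where
  "is_NA R \<longleftrightarrow> is_BA R \<and>
    rid R \<in> rcar R \<and>
    (\<forall>x\<in>rcar R. rconv R x \<in> rcar R) \<and>
    (\<forall>x\<in>rcar R. \<forall>y\<in>rcar R. rcomp R x y \<in> rcar R) \<and>
    (\<forall>x\<in>rcar R. \<forall>y\<in>rcar R. \<forall>z\<in>rcar R.
        rcomp R (rjoin R x y) z = rjoin R (rcomp R x z) (rcomp R y z)) \<and>
    (\<forall>x\<in>rcar R. rcomp R x (rid R) = x) \<and>
    (\<forall>x\<in>rcar R. rconv R (rconv R x) = x) \<and>
    (\<forall>x\<in>rcar R. \<forall>y\<in>rcar R. rconv R (rjoin R x y) = rjoin R (rconv R x) (rconv R y)) \<and>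
    (\<forall>x\<in>rcar R. \<forall>y\<in>rcar R. rconv R (rcomp R x y) = rcomp R (rconv R y) (rconv R x)) \<and>
    (\<forall>x\<in>rcar R. \<forall>y\<in>rcar R.
        rjoin R (rcomp R (rconv R x) (rcompl R (rcomp R x y))) (rcompl R y) = rcompl R y)"

definition is_RA :: "('a, 'm) ra_scheme \<Rightarrow> bool" where
  "is_RA R \<longleftrightarrow> is_NA R \<and>
    (\<forall>x\<in>rcar R. \<forall>y\<in>rcar R. \<forall>z\<in>rcar R.
        rcomp R (rcomp R x y) z = rcomp R x (rcomp R y z))"

definition atoms :: "('a, 'm) ra_scheme \<Rightarrow> 'a set" where
  "atoms R = {a \<in> rcar R. a \<noteq> rzero R \<and>
      (\<forall>x\<in>rcar R. leq R x a \<longrightarrow> x = rzero R \<or> x = a)}"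

definition diversity_atoms :: "('a, 'm) ra_scheme \<Rightarrow> 'a set" where
  "diversity_atoms R = {a \<in> atoms R. leq R a (rcompl R (rid R))}"

definition atomic :: "('a, 'm) ra_scheme \<Rightarrow> bool" where
  "atomic R \<longleftrightarrow> (\<forall>x\<in>rcar R. x \<noteq> rzero R \<longrightarrow> (\<exists>a\<in>atoms R. leq R a x))"

definition symmetric :: "('a, 'm) ra_scheme \<Rightarrow> bool" where
  "symmetric R \<longleftrightarrow> (\<forall>x\<in>rcar R. rconv R x = x)"

definition integral :: "('a, 'm) ra_scheme \<Rightarrow> bool" where
  "integral R \<longleftrightarrow> rid R \<in> atoms R"

definition restr :: "('a, 'm) ra_scheme \<Rightarrow> 'a set \<Rightarrow> ('a, 'm) ra_scheme" where
  "restr R S = R\<lparr>rcar := S\<rparr>"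

definition subalg :: "'a set \<Rightarrow> ('a, 'm) ra_scheme \<Rightarrow> bool" where
  "subalg S R \<longleftrightarrow> S \<subseteq> rcar R \<and>
    rzero R \<in> S \<and> rone R \<in> S \<and> rid R \<in> S \<and>
    (\<forall>x\<in>S. rcompl R x \<in> S \<and> rconv R x \<in> S) \<and>
    (\<forall>x\<in>S. \<forall>y\<in>S. rjoin R x y \<in> S \<and> rmeet R x y \<in> S \<and> rcomp R x y \<in> S)"

definition Sg :: "('a, 'm) ra_scheme \<Rightarrow> 'a set \<Rightarrow> 'a set" where
  "Sg R X = \<Inter>{S. subalg S R \<and> X \<subseteq> S}"

definition generated_by_atoms :: "('a, 'm) ra_scheme \<Rightarrow> bool" where
  "generated_by_atoms R \<longleftrightarrow> Sg R (atoms R) = rcar R"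

definition iso :: "('a \<Rightarrow> 'b) \<Rightarrow> ('a, 'm) ra_scheme \<Rightarrow> ('b, 'n) ra_scheme \<Rightarrow> bool" where
  "iso f R S \<longleftrightarrow> bij_betw f (rcar R) (rcar S) \<and>
    f (rzero R) = rzero S \<and> f (rone R) = rone S \<and> f (rid R) = rid S \<and>
    (\<forall>x\<in>rcar R. f (rcompl R x) = rcompl S (f x) \<and> f (rconv R x) = rconv S (f x)) \<and>
    (\<forall>x\<in>rcar R. \<forall>y\<in>rcar R.
        f (rjoin R x y) = rjoin S (f x) (f y) \<and>
        f (rmeet R x y) = rmeet S (f x) (f y) \<and>
        f (rcomp R x y) = rcomp S (f x) (f y))"

definition isomorphic :: "('a, 'm) ra_scheme \<Rightarrow> ('b, 'n) ra_scheme \<Rightarrow> bool" where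
  "isomorphic R S \<longleftrightarrow> (\<exists>f. iso f R S)"

definition is_lub :: "('a, 'm) ra_scheme \<Rightarrow> 'a set \<Rightarrow> 'a \<Rightarrow> bool" where
  "is_lub R X s \<longleftrightarrow> s \<in> rcar R \<and> (\<forall>x\<in>X. leq R x s) \<and>
     (\<forall>u\<in>rcar R. (\<forall>x\<in>X. leq R x u) \<longrightarrow> leq R s u)"

definition complete :: "('a, 'm) ra_scheme \<Rightarrow> bool" where
  "complete R \<longleftrightarrow> (\<forall>X. X \<subseteq> rcar R \<longrightarrow> (\<exists>s. is_lub R X s))"

definition dense_sub :: "'a set \<Rightarrow> ('a, 'm) ra_scheme \<Rightarrow> bool" where
  "dense_sub S R \<longleftrightarrow> (\<forall>x\<in>rcar R. x \<noteq> rzero R \<longrightarrow>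
      (\<exists>b\<in>S. b \<noteq> rzero R \<and> leq R b x))"

definition completion_of :: "('a, 'm) ra_scheme \<Rightarrow> ('a, 'm) ra_scheme \<Rightarrow> bool" where
  "completion_of C B \<longleftrightarrow> complete C \<and> subalg (rcar B) C \<and> B = restr C (rcar B) \<and>
     dense_sub (rcar B) C"

definition almost_same :: "('a, 'm) ra_scheme \<Rightarrow> 'a \<Rightarrow> 'a \<Rightarrow> bool" where
  "almost_same R x y \<longleftrightarrow> (\<exists>F. finite F \<and> F \<subseteq> atoms R \<and>
     is_lub R F (rjoin R (rmeet R x (rcompl R y)) (rmeet R y (rcompl R x))))"

record 'b atstr =
  ats_at  :: "'b set"
  ats_C   :: "('b \<times> 'b \<times> 'b) set"
  ats_cnv :: "'b \<Rightarrow> 'b"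
  ats_I   :: "'b set"

definition at_struct :: "('a, 'm) ra_scheme \<Rightarrow> 'a atstr" where
  "at_struct R = \<lparr> ats_at = atoms R,
     ats_C = {(x, y, z). x \<in> atoms R \<and> y \<in> atoms R \<and> z \<in> atoms R \<and> leq R z (rcomp R x y)},
     ats_cnv = (\<lambda>x. if x \<in> atoms R then rconv R x else undefined),
     ats_I = {x \<in> atoms R. leq R x (rid R)} \<rparr>"

definition Cm :: "'b atstr \<Rightarrow> 'b set ra" where
  "Cm S = \<lparr> rcar = Pow (ats_at S), rjoin = (\<union>), rmeet = (\<inter>),
     rcompl = (\<lambda>X. ats_at S - X), rzero = {}, rone = ats_at S, rid = ats_I S,
     rconv = (\<lambda>X. ats_cnv S ` X),
     rcomp = (\<lambda>X Y. {z. \<exists>x\<in>X. \<exists>y\<in>Y. (x, y, z) \<in> ats_C S}) \<rparr>"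

text \<open>E is (the carrier of) a subalgebra of A.\<close>
definition special_extension :: "'a set \<Rightarrow> ('a, 'm) ra_scheme \<Rightarrow> bool" where
  "special_extension E A \<longleftrightarrow>
    (\<forall>a\<in>diversity_atoms (restr A E). \<forall>b\<in>diversity_atoms (restr A E).
     \<forall>c\<in>diversity_atoms (restr A E).
       ((\<not> (a = b \<and> b = c) \<and> leq A c (rcomp A a b)) \<longrightarrow>
          (\<forall>x\<in>atoms A. \<forall>y\<in>atoms A. leq A x a \<longrightarrow> leq A y b \<longrightarrow> leq A c (rcomp A x y))) \<and>
       (leq A a (rcomp A a a) \<longrightarrow>
          (\<forall>x\<in>atoms A. \<forall>y\<in>atoms A. leq A x a \<longrightarrow> leq A y a \<longrightarrow>
             rmeet A (rcomp A x y) a \<noteq> rzero A)))"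

datatype 'a catom = CId | CDiv 'a nat

definition cE :: "'a set \<Rightarrow> ('a, 'm) ra_scheme \<Rightarrow> 'a \<Rightarrow> 'a" where
  "cE E A x = (THE e. e \<in> atoms (restr A E) \<and> leq A x e)"

definition Trel :: "nat \<Rightarrow> nat \<Rightarrow> nat \<Rightarrow> bool" where
  "Trel i j k \<longleftrightarrow> (i \<le> j \<and> j = k) \<or> (j \<le> k \<and> k = i) \<or> (k \<le> i \<and> i = j)"

definition CAt :: "('a, 'm) ra_scheme \<Rightarrow> 'a catom set" where
  "CAt A = {CId} \<union> {CDiv x i | x i. x \<in> diversity_atoms A}"

fun Cbase :: "'a set \<Rightarrow> ('a, 'm) ra_scheme \<Rightarrow> 'a catom \<Rightarrow> 'a catom \<Rightarrow> 'a catom \<Rightarrow> bool" where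
  "Cbase E A CId CId CId = True"
| "Cbase E A CId (CDiv x i) (CDiv y j) \<longleftrightarrow> x \<in> diversity_atoms A \<and> x = y \<and> i = j"
| "Cbase E A (CDiv x i) (CDiv y j) (CDiv z k) \<longleftrightarrow>
     x \<in> diversity_atoms A \<and> y \<in> diversity_atoms A \<and> z \<in> diversity_atoms A \<and>
     leq A z (rcomp A x y) \<and>
     ((cE E A x = cE E A y \<and> cE E A y = cE E A z) \<longrightarrow> Trel i j k)"
| "Cbase E A _ _ _ = False"

definition Ctri :: "'a set \<Rightarrow> ('a, 'm) ra_scheme \<Rightarrow> 'a catom \<Rightarrow> 'a catom \<Rightarrow> 'a catom \<Rightarrow> bool" where
  "Ctri E A u v w \<longleftrightarrow>
     Cbase E A u v w \<or> Cbase E A u w v \<or> Cbase E A v u w \<or>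
     Cbase E A v w u \<or> Cbase E A w u v \<or> Cbase E A w v u"

definition CEA :: "'a set \<Rightarrow> ('a, 'm) ra_scheme \<Rightarrow> 'a catom set ra" where
  "CEA E A = \<lparr> rcar = Pow (CAt A), rjoin = (\<union>), rmeet = (\<inter>),
     rcompl = (\<lambda>X. CAt A - X), rzero = {}, rone = CAt A, rid = {CId},
     rconv = (\<lambda>X. X),
     rcomp = (\<lambda>X Y. {w. \<exists>u\<in>X. \<exists>v\<in>Y. Ctri E A u v w}) \<rparr>"

definition Jfun :: "('a, 'm) ra_scheme \<Rightarrow> 'a \<Rightarrow> nat \<Rightarrow> 'a catom set" where
  "Jfun A a n = {CDiv x i | x i. x \<in> diversity_atoms A \<and> leq A x a \<and> n \<le> i}
                \<union> (if leq A (rid A) a then {CId} else {})"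

end

theory Submission
  imports Defs
begin

text \<open>
  Call a set X of atoms of C_E(A) N-uniform if, for indices k \<ge> N, whether x^(k) lies in X
  depends only on the atom c(x) of E. Singletons are uniform, and the N-uniform sets form a
  subalgebra for each N: closure under composition is where both conditions of a special
  extension and the relation T are used. Hence every element of B is uniform, and since there
  are only finitely many N-uniform sets, B is countable and locally finite; an N-uniform set
  agrees with J(e,0), e the join of the E-atoms it contains above level N, except on the
  finitely many atoms of index below N. The map a \<mapsto> J(a,0) is an embedding because A is
  finite and symmetric, so every atom below a;b already lies below x;y for atoms x \<le> a, y \<le> b,
  and every triangle of atoms of A lifts to C_E(A). The remaining statements hold for any algebra
  of all subsets of a set of atoms, such as C_E(A).
\<close>

lemma restr_simps [simp]:
  "rcar (restr R S) = S" "rjoin (restr R S) = rjoin R" "rmeet (restr R S) = rmeet R"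
  "rcompl (restr R S) = rcompl R" "rzero (restr R S) = rzero R" "rone (restr R S) = rone R"
  "rid (restr R S) = rid R" "rconv (restr R S) = rconv R" "rcomp (restr R S) = rcomp R"
  by (simp_all add: restr_def)

lemma leq_restr [simp]: "leq (restr R S) = leq R"
  by (simp add: leq_def fun_eq_iff)

lemma restr_rcar: "restr R (rcar R) = R"
  by (simp add: restr_def)

lemma subalg_restr_iff: "T \<subseteq> rcar R \<Longrightarrow> subalg S (restr R T) \<longleftrightarrow> S \<subseteq> T \<and> subalg S R"
  unfolding subalg_def by auto

lemma Sg_superset: "X \<subseteq> Sg R X"
  unfolding Sg_def by auto

lemma Sg_least: "subalg S R \<Longrightarrow> X \<subseteq> S \<Longrightarrow> Sg R X \<subseteq> S"
  unfolding Sg_def by auto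

lemma Sg_greatest: "(\<And>S. subalg S R \<Longrightarrow> X \<subseteq> S \<Longrightarrow> T \<subseteq> S) \<Longrightarrow> T \<subseteq> Sg R X"
  unfolding Sg_def by auto

lemma subalg_Sg: "subalg (rcar R) R \<Longrightarrow> X \<subseteq> rcar R \<Longrightarrow> subalg (Sg R X) R"
  unfolding Sg_def subalg_def by (auto simp: Inter_eq)

lemma subalg_Int: "subalg S R \<Longrightarrow> subalg T R \<Longrightarrow> subalg (S \<inter> T) R"
  unfolding subalg_def by auto

lemma subalg_UN_mono:
  assumes sub: "\<And>n::nat. subalg (S n) R" and mono: "mono S"
  shows "subalg (\<Union>n. S n) R"
proof -
  have common: "\<exists>n. x \<in> S n \<and> y \<in> S n" if x: "x \<in> (\<Union>n. S n)" and y: "y \<in> (\<Union>n. S n)" for x y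
  proof -
    obtain n where "x \<in> S n" using x by blast
    moreover obtain m where "y \<in> S m" using y by blast
    ultimately show ?thesis using monoD[OF mono, of n "max n m"] monoD[OF mono, of m "max n m"] by auto
  qed
  show ?thesis
    unfolding subalg_def
  proof (intro conjI ballI)
    show "(\<Union>n. S n) \<subseteq> rcar R" using sub unfolding subalg_def by blast
    show "rzero R \<in> (\<Union>n. S n)" "rone R \<in> (\<Union>n. S n)" "rid R \<in> (\<Union>n. S n)"
      using sub[of 0] unfolding subalg_def by blast+
    fix x assume "x \<in> (\<Union>n. S n)"
    then obtain n where "x \<in> S n" by blast
    thus "rcompl R x \<in> (\<Union>n. S n)" "rconv R x \<in> (\<Union>n. S n)"
      using sub[of n] unfolding subalg_def by blast+
    fix y assume "y \<in> (\<Union>n. S n)"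
    then obtain n where "x \<in> S n" "y \<in> S n" using common \<open>x \<in> (\<Union>n. S n)\<close> by blast
    thus "rjoin R x y \<in> (\<Union>n. S n)" "rmeet R x y \<in> (\<Union>n. S n)" "rcomp R x y \<in> (\<Union>n. S n)"
      using sub[of n] unfolding subalg_def by blast+
  qed
qed

lemma atoms_of_set_algebra:
  assumes "rjoin R = (\<union>)" "rzero R = {}" "rcar R \<subseteq> Pow U" "\<forall>u\<in>U. {u} \<in> rcar R"
  shows "atoms R = (\<lambda>u. {u}) ` U"
proof (intro set_eqI iffI)
  fix a assume a: "a \<in> atoms R"
  hence a1: "a \<in> rcar R" "a \<noteq> {}" "\<forall>x\<in>rcar R. x \<union> a = a \<longrightarrow> x = {} \<or> x = a"
    using assms unfolding atoms_def leq_def by auto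
  obtain u where u: "u \<in> a" using a1 by auto
  have "u \<in> U" using u a1 assms by auto
  moreover have "{u} = a" using a1(3) assms(4) \<open>u \<in> U\<close> u by auto
  ultimately show "a \<in> (\<lambda>u. {u}) ` U" by auto
next
  fix a assume "a \<in> (\<lambda>u. {u}) ` U"
  then show "a \<in> atoms R" unfolding atoms_def leq_def using assms by auto
qed

section \<open>Boolean algebras on a carrier\<close>

locale ra_boolean =
  fixes R :: "('a, 'm) ra_scheme"
  assumes boolean: "is_BA R"
begin

abbreviation lq (infix "\<sqsubseteq>" 50) where "x \<sqsubseteq> y \<equiv> leq R x y"
abbreviation jn (infixl "\<squnion>" 65) where "x \<squnion> y \<equiv> rjoin R x y"
abbreviation mt (infixl "\<sqinter>" 70) where "x \<sqinter> y \<equiv> rmeet R x y"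
abbreviation cpl ("\<sim>_" [81] 80) where "\<sim>x \<equiv> rcompl R x"
abbreviation zr ("\<zero>") where "\<zero> \<equiv> rzero R"
abbreviation tp ("\<one>") where "\<one> \<equiv> rone R"
abbreviation car where "car \<equiv> rcar R"

lemma zero_car [simp]: "\<zero> \<in> car"
  and one_car [simp]: "\<one> \<in> car"
  and join_car [simp]: "x \<in> car \<Longrightarrow> y \<in> car \<Longrightarrow> x \<squnion> y \<in> car"
  and meet_car [simp]: "x \<in> car \<Longrightarrow> y \<in> car \<Longrightarrow> x \<sqinter> y \<in> car"
  and compl_car [simp]: "x \<in> car \<Longrightarrow> \<sim>x \<in> car"
  and join_comm: "x \<in> car \<Longrightarrow> y \<in> car \<Longrightarrow> x \<squnion> y = y \<squnion> x"
  and meet_comm: "x \<in> car \<Longrightarrow> y \<in> car \<Longrightarrow> x \<sqinter> y = y \<sqinter> x"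
  and join_assoc: "x \<in> car \<Longrightarrow> y \<in> car \<Longrightarrow> z \<in> car \<Longrightarrow> x \<squnion> y \<squnion> z = x \<squnion> (y \<squnion> z)"
  and meet_assoc: "x \<in> car \<Longrightarrow> y \<in> car \<Longrightarrow> z \<in> car \<Longrightarrow> x \<sqinter> y \<sqinter> z = x \<sqinter> (y \<sqinter> z)"
  and meet_join_distrib: "x \<in> car \<Longrightarrow> y \<in> car \<Longrightarrow> z \<in> car \<Longrightarrow> x \<sqinter> (y \<squnion> z) = x \<sqinter> y \<squnion> x \<sqinter> z"
  and join_meet_absorb: "x \<in> car \<Longrightarrow> y \<in> car \<Longrightarrow> x \<squnion> x \<sqinter> y = x"
  and meet_join_absorb: "x \<in> car \<Longrightarrow> y \<in> car \<Longrightarrow> x \<sqinter> (x \<squnion> y) = x"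
  and join_compl: "x \<in> car \<Longrightarrow> x \<squnion> \<sim>x = \<one>"
  and meet_compl: "x \<in> car \<Longrightarrow> x \<sqinter> \<sim>x = \<zero>"
  using boolean unfolding is_BA_def by auto

lemma join_idem: "x \<in> car \<Longrightarrow> x \<squnion> x = x"
  by (metis join_meet_absorb meet_join_absorb meet_car join_car)

lemma meet_idem: "x \<in> car \<Longrightarrow> x \<sqinter> x = x"
  by (metis join_meet_absorb meet_join_absorb meet_car join_car)

lemma le_iff_meet: "x \<in> car \<Longrightarrow> y \<in> car \<Longrightarrow> x \<sqsubseteq> y \<longleftrightarrow> x \<sqinter> y = x"
  unfolding leq_def by (metis join_meet_absorb meet_join_absorb join_comm meet_comm)

lemma le_refl: "x \<in> car \<Longrightarrow> x \<sqsubseteq> x"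
  unfolding leq_def by (simp add: join_idem)

lemma le_antisym: "x \<in> car \<Longrightarrow> y \<in> car \<Longrightarrow> x \<sqsubseteq> y \<Longrightarrow> y \<sqsubseteq> x \<Longrightarrow> x = y"
  unfolding leq_def by (metis join_comm)

lemma le_trans: "x \<in> car \<Longrightarrow> y \<in> car \<Longrightarrow> z \<in> car \<Longrightarrow> x \<sqsubseteq> y \<Longrightarrow> y \<sqsubseteq> z \<Longrightarrow> x \<sqsubseteq> z"
  unfolding leq_def by (metis join_assoc)

lemma le_joinI1: "x \<in> car \<Longrightarrow> y \<in> car \<Longrightarrow> x \<sqsubseteq> x \<squnion> y"
  unfolding leq_def by (metis join_assoc join_idem)

lemma le_joinI2: "x \<in> car \<Longrightarrow> y \<in> car \<Longrightarrow> y \<sqsubseteq> x \<squnion> y"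
  by (metis le_joinI1 join_comm)

lemma meet_le1: "x \<in> car \<Longrightarrow> y \<in> car \<Longrightarrow> x \<sqinter> y \<sqsubseteq> x"
  by (metis le_iff_meet meet_assoc meet_comm meet_idem meet_car)

lemma meet_le2: "x \<in> car \<Longrightarrow> y \<in> car \<Longrightarrow> x \<sqinter> y \<sqsubseteq> y"
  by (metis meet_le1 meet_comm)

lemma le_meetI: "x \<in> car \<Longrightarrow> y \<in> car \<Longrightarrow> z \<in> car \<Longrightarrow> z \<sqsubseteq> x \<Longrightarrow> z \<sqsubseteq> y \<Longrightarrow> z \<sqsubseteq> x \<sqinter> y"
  by (metis le_iff_meet meet_assoc meet_car)

lemma le_meetD:
  "x \<in> car \<Longrightarrow> y \<in> car \<Longrightarrow> z \<in> car \<Longrightarrow> z \<sqsubseteq> x \<sqinter> y \<Longrightarrow> z \<sqsubseteq> x \<and> z \<sqsubseteq> y"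
  using le_trans[of z "x \<sqinter> y" x] le_trans[of z "x \<sqinter> y" y] meet_le1 meet_le2 by auto

lemma zero_le: "x \<in> car \<Longrightarrow> \<zero> \<sqsubseteq> x"
  by (metis meet_compl compl_car meet_le1)

lemma le_one: "x \<in> car \<Longrightarrow> x \<sqsubseteq> \<one>"
  by (metis join_compl compl_car le_joinI1)

lemma meet_zero: "x \<in> car \<Longrightarrow> x \<sqinter> \<zero> = \<zero>"
  by (metis zero_le le_iff_meet meet_comm zero_car)

lemma join_zero: "x \<in> car \<Longrightarrow> x \<squnion> \<zero> = x"
  by (metis zero_le leq_def join_comm zero_car)

lemma meet_one: "x \<in> car \<Longrightarrow> x \<sqinter> \<one> = x"
  by (metis le_one le_iff_meet one_car)

lemma le_zero_iff: "x \<in> car \<Longrightarrow> x \<sqsubseteq> \<zero> \<longleftrightarrow> x = \<zero>"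
  by (simp add: le_iff_meet meet_zero eq_commute)

lemma le_compl_iff: "x \<in> car \<Longrightarrow> y \<in> car \<Longrightarrow> x \<sqsubseteq> \<sim>y \<longleftrightarrow> x \<sqinter> y = \<zero>"
proof
  assume xy: "x \<in> car" "y \<in> car" and "x \<sqsubseteq> \<sim>y"
  hence "x \<sqinter> \<sim>y = x" by (simp add: le_iff_meet)
  hence "x \<sqinter> y = x \<sqinter> (\<sim>y \<sqinter> y)" using xy by (metis meet_assoc compl_car meet_comm)
  also have "\<dots> = \<zero>" using xy by (metis meet_compl meet_comm compl_car meet_zero)
  finally show "x \<sqinter> y = \<zero>" .
next
  assume xy: "x \<in> car" "y \<in> car" and h: "x \<sqinter> y = \<zero>"
  have "x = x \<sqinter> (y \<squnion> \<sim>y)" using xy by (simp add: join_compl meet_one)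
  also have "\<dots> = \<zero> \<squnion> x \<sqinter> \<sim>y" using xy h by (simp add: meet_join_distrib)
  also have "\<dots> = x \<sqinter> \<sim>y" using xy by (metis join_zero join_comm meet_car compl_car zero_car)
  finally show "x \<sqsubseteq> \<sim>y" using xy by (metis le_iff_meet compl_car)
qed

lemma not_le_iff_meet_compl: "x \<in> car \<Longrightarrow> y \<in> car \<Longrightarrow> \<not> x \<sqsubseteq> y \<longleftrightarrow> x \<sqinter> \<sim>y \<noteq> \<zero>"
proof
  assume xy: "x \<in> car" "y \<in> car" "\<not> x \<sqsubseteq> y"
  show "x \<sqinter> \<sim>y \<noteq> \<zero>"
  proof
    assume h: "x \<sqinter> \<sim>y = \<zero>"
    have "x = x \<sqinter> (y \<squnion> \<sim>y)" using xy by (simp add: join_compl meet_one)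
    also have "\<dots> = x \<sqinter> y" using xy h by (simp add: meet_join_distrib join_zero)
    finally show False using xy by (metis le_iff_meet)
  qed
next
  assume xy: "x \<in> car" "y \<in> car" "x \<sqinter> \<sim>y \<noteq> \<zero>"
  show "\<not> x \<sqsubseteq> y"
  proof
    assume "x \<sqsubseteq> y"
    hence "x \<sqinter> \<sim>y = x \<sqinter> y \<sqinter> \<sim>y" using xy le_iff_meet by simp
    also have "\<dots> = \<zero>" using xy by (simp add: meet_assoc meet_compl meet_zero)
    finally show False using xy by simp
  qed
qed

lemma atom_car: "z \<in> atoms R \<Longrightarrow> z \<in> car"
  and atom_nonzero: "z \<in> atoms R \<Longrightarrow> z \<noteq> \<zero>"
  unfolding atoms_def by auto

lemma atom_le_or_disjoint:
  assumes z: "z \<in> atoms R" and w: "w \<in> car"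
  shows "z \<sqsubseteq> w \<or> z \<sqinter> w = \<zero>"
proof -
  have zc: "z \<in> car" using z by (rule atom_car)
  have "z \<sqinter> w \<sqsubseteq> z" using zc w by (rule meet_le1)
  hence "z \<sqinter> w = \<zero> \<or> z \<sqinter> w = z" using z zc w unfolding atoms_def by auto
  thus ?thesis using zc w le_iff_meet by auto
qed

lemma atom_meet_nonzero_iff: "z \<in> atoms R \<Longrightarrow> w \<in> car \<Longrightarrow> z \<sqinter> w \<noteq> \<zero> \<longleftrightarrow> z \<sqsubseteq> w"
  using atom_le_or_disjoint[of z w] atom_car[of z] atom_nonzero[of z] le_iff_meet[of z w] by auto

lemma atom_le_join_iff:
  assumes z: "z \<in> atoms R" and xy: "x \<in> car" "y \<in> car"
  shows "z \<sqsubseteq> x \<squnion> y \<longleftrightarrow> z \<sqsubseteq> x \<or> z \<sqsubseteq> y"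
proof
  have zc: "z \<in> car" using z atom_car by auto
  assume h: "z \<sqsubseteq> x \<squnion> y"
  show "z \<sqsubseteq> x \<or> z \<sqsubseteq> y"
  proof (rule ccontr)
    assume "\<not> (z \<sqsubseteq> x \<or> z \<sqsubseteq> y)"
    hence "z \<sqinter> x = \<zero>" "z \<sqinter> y = \<zero>" using atom_le_or_disjoint z xy by auto
    hence "z \<sqinter> (x \<squnion> y) = \<zero>" using zc xy by (simp add: meet_join_distrib join_idem)
    moreover have "z \<sqinter> (x \<squnion> y) = z" using h zc xy le_iff_meet by auto
    ultimately show False using atom_nonzero z by auto
  qed
next
  assume "z \<sqsubseteq> x \<or> z \<sqsubseteq> y"
  then show "z \<sqsubseteq> x \<squnion> y"
    using le_trans[of z x "x \<squnion> y"] le_trans[of z y "x \<squnion> y"] le_joinI1 le_joinI2 xy atom_car[OF z]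
    by auto
qed

lemma atom_le_compl_iff: "z \<in> atoms R \<Longrightarrow> w \<in> car \<Longrightarrow> z \<sqsubseteq> \<sim>w \<longleftrightarrow> \<not> z \<sqsubseteq> w"
  using atom_meet_nonzero_iff[of z w] atom_car[of z] le_compl_iff[of z w] by auto

lemma atom_le_atom: "z \<in> atoms R \<Longrightarrow> y \<in> atoms R \<Longrightarrow> z \<sqsubseteq> y \<Longrightarrow> z = y"
  unfolding atoms_def by auto

end

locale ra_finite = ra_boolean +
  assumes finite_car: "finite car"
begin

lemma ex_minimal:
  assumes S: "S \<subseteq> car" "S \<noteq> {}"
  shows "\<exists>e\<in>S. \<forall>e'\<in>S. e' \<sqsubseteq> e \<longrightarrow> e' = e"
proof -
  define below where "below e = card {w\<in>car. w \<sqsubseteq> e}" for e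
  have fin: "finite (below ` S)" using S finite_car by (meson finite_imageI finite_subset)
  have "Min (below ` S) \<in> below ` S" using Min_in[OF fin] S by auto
  then obtain e where e: "e \<in> S" "below e = Min (below ` S)" by (metis imageE)
  have "e' = e" if e': "e' \<in> S" "e' \<sqsubseteq> e" for e'
  proof (rule ccontr)
    assume ne: "e' \<noteq> e"
    have ec: "e \<in> car" "e' \<in> car" using e' e S by auto
    have "{w\<in>car. w \<sqsubseteq> e'} \<subset> {w\<in>car. w \<sqsubseteq> e}"
      using le_trans[of _ e' e] le_antisym[of e e'] le_refl[of e] ec e' ne by blast
    hence "below e' < below e" unfolding below_def using finite_car by (simp add: psubset_card_mono)
    moreover have "below e \<le> below e'" using e Min_le[OF fin] e' by auto
    ultimately show False by simp
  qed
  thus ?thesis using e by blast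
qed

lemma ex_atom_below:
  assumes x: "x \<in> car" "x \<noteq> \<zero>"
  shows "\<exists>z\<in>atoms R. z \<sqsubseteq> x"
proof -
  obtain e where e: "e \<in> car" "e \<noteq> \<zero>" "e \<sqsubseteq> x"
    and min: "\<forall>e'\<in>{w\<in>car. w \<noteq> \<zero> \<and> w \<sqsubseteq> x}. e' \<sqsubseteq> e \<longrightarrow> e' = e"
    using ex_minimal[of "{w\<in>car. w \<noteq> \<zero> \<and> w \<sqsubseteq> x}"] x le_refl by blast
  have "y = \<zero> \<or> y = e" if "y \<in> car" "y \<sqsubseteq> e" for y
    using min le_trans[of y e x] that e x by auto
  hence "e \<in> atoms R" using e unfolding atoms_def by auto
  thus ?thesis using e by auto
qed

lemma ex_atom_below_meet:
  "x \<in> car \<Longrightarrow> y \<in> car \<Longrightarrow> x \<sqinter> y \<noteq> \<zero> \<Longrightarrow> \<exists>z\<in>atoms R. z \<sqsubseteq> x \<and> z \<sqsubseteq> y"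
proof -
  assume xy: "x \<in> car" "y \<in> car" "x \<sqinter> y \<noteq> \<zero>"
  then obtain z where "z \<in> atoms R" "z \<sqsubseteq> x \<sqinter> y" using ex_atom_below[of "x \<sqinter> y"] by auto
  thus ?thesis using le_meetD[of x y z] atom_car xy by blast
qed

end

section \<open>Symmetric non-associative relation algebras\<close>

locale ra_symmetric_na = ra_boolean +
  assumes nonassociative: "is_NA R" and symmetric: "symmetric R"
begin

abbreviation idn ("\<one>''") where "\<one>' \<equiv> rid R"
abbreviation cmp (infixl "\<odot>" 75) where "x \<odot> y \<equiv> rcomp R x y"

lemma id_car [simp]: "\<one>' \<in> car"
  and comp_car [simp]: "x \<in> car \<Longrightarrow> y \<in> car \<Longrightarrow> x \<odot> y \<in> car"
  and comp_join_distrib: "x \<in> car \<Longrightarrow> y \<in> car \<Longrightarrow> z \<in> car \<Longrightarrow> (x \<squnion> y) \<odot> z = x \<odot> z \<squnion> y \<odot> z"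
  and comp_id: "x \<in> car \<Longrightarrow> x \<odot> \<one>' = x"
  and conv_comp: "x \<in> car \<Longrightarrow> y \<in> car \<Longrightarrow> rconv R (x \<odot> y) = rconv R y \<odot> rconv R x"
  and peirce_conv: "x \<in> car \<Longrightarrow> y \<in> car \<Longrightarrow> rconv R x \<odot> \<sim>(x \<odot> y) \<squnion> \<sim>y = \<sim>y"
  using nonassociative unfolding is_NA_def by auto

lemma conv_id [simp]: "x \<in> car \<Longrightarrow> rconv R x = x"
  using symmetric unfolding symmetric_def by auto

lemma subalg_car: "subalg car R"
  unfolding subalg_def by auto

lemma comp_comm: "x \<in> car \<Longrightarrow> y \<in> car \<Longrightarrow> x \<odot> y = y \<odot> x"
  using conv_comp[of x y] by simp

lemma id_comp: "x \<in> car \<Longrightarrow> \<one>' \<odot> x = x"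
  by (metis comp_id comp_comm id_car)

lemma comp_mono:
  assumes "x \<in> car" "x' \<in> car" "y \<in> car" "y' \<in> car" "x \<sqsubseteq> x'" "y \<sqsubseteq> y'"
  shows "x \<odot> y \<sqsubseteq> x' \<odot> y'"
proof -
  have mono1: "u \<odot> v \<sqsubseteq> u' \<odot> v" if "u \<in> car" "u' \<in> car" "v \<in> car" "u \<sqsubseteq> u'" for u u' v
  proof -
    have "u' \<odot> v = u \<odot> v \<squnion> u' \<odot> v" using that comp_join_distrib unfolding leq_def by metis
    thus ?thesis using that by (metis le_joinI1 comp_car)
  qed
  have "x \<odot> y \<sqsubseteq> x' \<odot> y" using assms mono1 by auto
  moreover have "x' \<odot> y \<sqsubseteq> x' \<odot> y'" using assms mono1[of y y' x'] comp_comm by auto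
  ultimately show ?thesis using assms le_trans[of "x \<odot> y" "x' \<odot> y" "x' \<odot> y'"] by auto
qed

lemma peirce: "x \<in> car \<Longrightarrow> y \<in> car \<Longrightarrow> x \<odot> \<sim>(x \<odot> y) \<sqsubseteq> \<sim>y"
  using peirce_conv unfolding leq_def by simp

lemma cycle_law:
  assumes "x \<in> car" "y \<in> car" "z \<in> car" "x \<odot> z \<sqinter> y = \<zero>"
  shows "x \<odot> y \<sqinter> z = \<zero>"
proof -
  have "y \<sqsubseteq> \<sim>(x \<odot> z)" using assms le_compl_iff meet_comm by (metis comp_car)
  hence "x \<odot> y \<sqsubseteq> x \<odot> \<sim>(x \<odot> z)" using assms comp_mono[of x x y] le_refl by simp
  hence "x \<odot> y \<sqsubseteq> \<sim>z" using assms peirce[of x z] le_trans[of "x \<odot> y" "x \<odot> \<sim>(x \<odot> z)" "\<sim>z"] by auto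
  thus ?thesis using assms le_compl_iff by simp
qed

lemma cycle_law_nonzero:
  "x \<in> car \<Longrightarrow> y \<in> car \<Longrightarrow> z \<in> car \<Longrightarrow> x \<odot> y \<sqinter> z \<noteq> \<zero> \<Longrightarrow> x \<odot> z \<sqinter> y \<noteq> \<zero>"
  using cycle_law by blast

lemma atom_triangle_rotate:
  assumes "x \<in> atoms R" "y \<in> atoms R" "z \<in> atoms R" "z \<sqsubseteq> x \<odot> y"
  shows "y \<sqsubseteq> x \<odot> z"
proof -
  have c: "x \<in> car" "y \<in> car" "z \<in> car" using assms atom_car by auto
  have "x \<odot> y \<sqinter> z \<noteq> \<zero>" using assms atom_meet_nonzero_iff c meet_comm by auto
  hence "y \<sqinter> x \<odot> z \<noteq> \<zero>" using cycle_law_nonzero c meet_comm by auto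
  thus ?thesis using atom_meet_nonzero_iff assms c by auto
qed

end

locale ra_finite_symmetric_na = ra_symmetric_na + ra_finite
begin

lemma atom_below_comp_decompose:
  assumes z: "z \<in> atoms R" and ab: "a \<in> car" "b \<in> car" and h: "z \<sqsubseteq> a \<odot> b"
  shows "\<exists>x\<in>atoms R. \<exists>y\<in>atoms R. x \<sqsubseteq> a \<and> y \<sqsubseteq> b \<and> z \<sqsubseteq> x \<odot> y"
proof -
  have zc: "z \<in> car" using z atom_car by auto
  have "b \<odot> a \<sqinter> z \<noteq> \<zero>" using h z ab zc atom_meet_nonzero_iff comp_comm[of a b] meet_comm by auto
  hence "b \<odot> z \<sqinter> a \<noteq> \<zero>" using cycle_law_nonzero zc ab by auto
  then obtain x where x: "x \<in> atoms R" "x \<sqsubseteq> b \<odot> z" "x \<sqsubseteq> a"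
    using ex_atom_below_meet zc ab by (meson comp_car)
  have xc: "x \<in> car" using x atom_car by auto
  have "x \<odot> b \<sqinter> z \<noteq> \<zero>"
  proof -
    have "b \<odot> z \<sqinter> x \<noteq> \<zero>" using x xc zc ab atom_meet_nonzero_iff meet_comm by auto
    hence "b \<odot> x \<sqinter> z \<noteq> \<zero>" using cycle_law_nonzero xc zc ab by auto
    thus ?thesis using comp_comm xc ab by auto
  qed
  hence "x \<odot> z \<sqinter> b \<noteq> \<zero>" using cycle_law_nonzero xc zc ab by auto
  then obtain y where y: "y \<in> atoms R" "y \<sqsubseteq> x \<odot> z" "y \<sqsubseteq> b"
    using ex_atom_below_meet xc zc ab by (meson comp_car)
  have "z \<sqsubseteq> x \<odot> y" using atom_triangle_rotate[OF x(1) z y(1) y(2)] .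
  thus ?thesis using x y by auto
qed

end

locale ra_finite_subalgebra = ra_finite +
  fixes E :: "'a set"
  assumes subalgebra: "subalg E R"
begin

lemma E_subset: "E \<subseteq> car"
  and zero_in_E: "\<zero> \<in> E" and one_in_E: "\<one> \<in> E" and id_in_E: "rid R \<in> E"
  and compl_in_E: "x \<in> E \<Longrightarrow> \<sim>x \<in> E"
  and join_in_E: "x \<in> E \<Longrightarrow> y \<in> E \<Longrightarrow> x \<squnion> y \<in> E"
  and meet_in_E: "x \<in> E \<Longrightarrow> y \<in> E \<Longrightarrow> x \<sqinter> y \<in> E"
  and comp_in_E: "x \<in> E \<Longrightarrow> y \<in> E \<Longrightarrow> rcomp R x y \<in> E"
  using subalgebra unfolding subalg_def by auto

lemma atoms_restr: "atoms (restr R E) = {a\<in>E. a \<noteq> \<zero> \<and> (\<forall>x\<in>E. x \<sqsubseteq> a \<longrightarrow> x = \<zero> \<or> x = a)}"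
  unfolding atoms_def by simp

lemma E_atom_car: "e \<in> atoms (restr R E) \<Longrightarrow> e \<in> car"
  using atoms_restr E_subset by auto

lemma E_atom_le_if_common_atom:
  assumes a: "a \<in> atoms (restr R E)" and w: "w \<in> E" and z: "z \<in> atoms R"
    and za: "z \<sqsubseteq> a" and zw: "z \<sqsubseteq> w"
  shows "a \<sqsubseteq> w"
proof -
  have ac: "a \<in> E" "a \<in> car" using a atoms_restr E_subset by auto
  have wc: "w \<in> car" using w E_subset by auto
  have "z \<sqsubseteq> a \<sqinter> w" using le_meetI ac wc atom_car[OF z] za zw by auto
  hence "a \<sqinter> w \<noteq> \<zero>" using le_zero_iff atom_car[OF z] atom_nonzero[OF z] by auto
  moreover have "a \<sqinter> w \<sqsubseteq> a" using meet_le1 ac wc by auto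
  ultimately have "a \<sqinter> w = a" using a meet_in_E ac w unfolding atoms_restr by auto
  thus ?thesis using le_iff_meet ac wc by auto
qed

lemma ex_E_atom_above:
  assumes z: "z \<in> atoms R"
  shows "\<exists>e\<in>atoms (restr R E). z \<sqsubseteq> e"
proof -
  have zc: "z \<in> car" using z atom_car by auto
  obtain e where e: "e \<in> E" "z \<sqsubseteq> e" and min: "\<forall>e'\<in>{w\<in>E. z \<sqsubseteq> w}. e' \<sqsubseteq> e \<longrightarrow> e' = e"
    using ex_minimal[of "{w\<in>E. z \<sqsubseteq> w}"] E_subset one_in_E le_one zc by blast
  have ec: "e \<in> car" using e E_subset by auto
  have "y = \<zero> \<or> y = e" if y: "y \<in> E" "y \<sqsubseteq> e" for y
  proof (cases "z \<sqsubseteq> y")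
    case True
    thus ?thesis using min y by auto
  next
    case False
    have yc: "y \<in> car" using y E_subset by auto
    have "z \<sqsubseteq> e \<sqinter> \<sim>y" using False atom_le_compl_iff z yc le_meetI ec zc e by auto
    moreover have "e \<sqinter> \<sim>y \<in> E" "e \<sqinter> \<sim>y \<sqsubseteq> e" using meet_in_E compl_in_E y e meet_le1 ec yc by auto
    ultimately have "e \<sqinter> \<sim>y = e" using min by auto
    hence "y \<sqinter> \<sim>y = y" using y(2) yc ec le_iff_meet meet_assoc meet_comm by (metis compl_car)
    thus ?thesis using meet_compl yc by auto
  qed
  moreover have "e \<noteq> \<zero>" using e le_zero_iff[OF zc] atom_nonzero[OF z] by auto
  ultimately have "e \<in> atoms (restr R E)" using e unfolding atoms_restr by auto
  thus ?thesis using e by auto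
qed

lemma E_atom_above_unique:
  assumes "z \<in> atoms R" "e \<in> atoms (restr R E)" "e' \<in> atoms (restr R E)" "z \<sqsubseteq> e" "z \<sqsubseteq> e'"
  shows "e = e'"
proof -
  have "e \<in> E" "e' \<in> E" using assms atoms_restr by auto
  hence "e \<sqsubseteq> e'" "e' \<sqsubseteq> e" using E_atom_le_if_common_atom assms by auto
  thus ?thesis using le_antisym \<open>e \<in> E\<close> \<open>e' \<in> E\<close> E_subset by auto
qed

lemma cE_atom: "z \<in> atoms R \<Longrightarrow> cE E R z \<in> atoms (restr R E)"
  and le_cE: "z \<in> atoms R \<Longrightarrow> z \<sqsubseteq> cE E R z"
proof -
  assume "z \<in> atoms R"
  hence "\<exists>!e. e \<in> atoms (restr R E) \<and> z \<sqsubseteq> e" using ex_E_atom_above E_atom_above_unique by blast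
  hence "cE E R z \<in> atoms (restr R E) \<and> z \<sqsubseteq> cE E R z" unfolding cE_def by (rule theI')
  thus "cE E R z \<in> atoms (restr R E)" "z \<sqsubseteq> cE E R z" by auto
qed

lemma cE_eqI: "z \<in> atoms R \<Longrightarrow> e \<in> atoms (restr R E) \<Longrightarrow> z \<sqsubseteq> e \<Longrightarrow> cE E R z = e"
  using cE_atom le_cE E_atom_above_unique by blast

lemma cE_diversity:
  assumes z: "z \<in> diversity_atoms R"
  shows "cE E R z \<in> diversity_atoms (restr R E)"
proof -
  have za: "z \<in> atoms R" "z \<sqsubseteq> \<sim>rid R" using z unfolding diversity_atoms_def by auto
  hence "cE E R z \<sqsubseteq> \<sim>rid R"
    using E_atom_le_if_common_atom[OF cE_atom _ za(1) le_cE] compl_in_E id_in_E by auto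
  thus ?thesis using cE_atom[OF za(1)] unfolding diversity_atoms_def by simp
qed

lemma ex_E_join_of_finite:
  "finite P \<Longrightarrow> P \<subseteq> E \<Longrightarrow> \<exists>e\<in>E. \<forall>z\<in>atoms R. z \<sqsubseteq> e \<longleftrightarrow> (\<exists>p\<in>P. z \<sqsubseteq> p)"
proof (induction P rule: finite_induct)
  case empty
  have "\<forall>z\<in>atoms R. \<not> z \<sqsubseteq> \<zero>" using le_zero_iff atom_car atom_nonzero by blast
  thus ?case using zero_in_E by blast
next
  case (insert p P)
  then obtain e where e: "e \<in> E" "\<forall>z\<in>atoms R. z \<sqsubseteq> e \<longleftrightarrow> (\<exists>p\<in>P. z \<sqsubseteq> p)" by auto
  have "p \<in> E" using insert by auto
  hence "\<forall>z\<in>atoms R. z \<sqsubseteq> e \<squnion> p \<longleftrightarrow> (\<exists>q\<in>insert p P. z \<sqsubseteq> q)"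
    using atom_le_join_iff[of _ e p] e E_subset by auto
  thus ?case using join_in_E e \<open>p \<in> E\<close> by blast
qed

end

section \<open>The algebra C_E(A)\<close>

fun base_atom :: "('a, 'm) ra_scheme \<Rightarrow> 'a catom \<Rightarrow> 'a" where
  "base_atom A CId = rid A"
| "base_atom A (CDiv x i) = x"

lemma CAt_CId [simp]: "CId \<in> CAt A"
  and CAt_CDiv [simp]: "CDiv x i \<in> CAt A \<longleftrightarrow> x \<in> diversity_atoms A"
  unfolding CAt_def by auto

lemma Ctri_sym: "Ctri E A u v w \<Longrightarrow> Ctri E A v u w" "Ctri E A u v w \<Longrightarrow> Ctri E A u w v"
  unfolding Ctri_def by auto

lemma Ctri_CId_left: "Ctri E A CId v w \<longleftrightarrow> v = w \<and> v \<in> CAt A"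
  by (cases v; cases w) (auto simp: Ctri_def)

lemma Ctri_CId_right: "Ctri E A u CId w \<longleftrightarrow> u = w \<and> u \<in> CAt A"
  using Ctri_CId_left Ctri_sym by metis

lemma Ctri_diversity_diagonal: "x \<in> diversity_atoms A \<Longrightarrow> Ctri E A (CDiv x i) (CDiv x i) CId"
  unfolding Ctri_def by simp

lemma Trel_diagonal: "Trel k k k"
  and Trel_le_eq: "i \<le> k \<Longrightarrow> Trel i k k"
  and Trel_eq_le: "j \<le> k \<Longrightarrow> Trel k j k"
  unfolding Trel_def by auto

lemma Trel_lower_bound: "Trel i j k \<Longrightarrow> N \<le> k \<Longrightarrow> N \<le> i \<or> N \<le> j"
  unfolding Trel_def by auto

lemma CEA_simps [simp]:
  "rcar (CEA E A) = Pow (CAt A)" "rjoin (CEA E A) = (\<union>)" "rmeet (CEA E A) = (\<inter>)"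
  "rcompl (CEA E A) = (\<lambda>X. CAt A - X)" "rzero (CEA E A) = {}" "rone (CEA E A) = CAt A"
  "rid (CEA E A) = {CId}" "rconv (CEA E A) = (\<lambda>X. X)"
  "rcomp (CEA E A) = (\<lambda>X Y. {w. \<exists>u\<in>X. \<exists>v\<in>Y. Ctri E A u v w})"
  by (simp_all add: CEA_def)

lemma leq_CEA: "leq (CEA E A) X Y \<longleftrightarrow> X \<subseteq> Y"
  unfolding leq_def by auto

abbreviation atom_subalgebra :: "('b, 'm) ra_scheme \<Rightarrow> ('b, 'm) ra_scheme" where
  "atom_subalgebra C \<equiv> restr C (Sg C (atoms C))"

lemma Cbase_in_CAt: "Cbase E A u v w \<Longrightarrow> u \<in> CAt A \<and> v \<in> CAt A \<and> w \<in> CAt A"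
  by (cases u; cases v; cases w) auto

lemma Ctri_in_CAt: "Ctri E A u v w \<Longrightarrow> u \<in> CAt A \<and> v \<in> CAt A \<and> w \<in> CAt A"
  unfolding Ctri_def using Cbase_in_CAt by blast

lemma CEA_comp_subset: "rcomp (CEA E A) X Y \<subseteq> CAt A"
  by (auto dest: Ctri_in_CAt)

lemma subalg_CEA: "subalg (rcar (CEA E A)) (CEA E A)"
  unfolding subalg_def using CEA_comp_subset[of E A] by auto

lemma atoms_CEA: "atoms (CEA E A) = (\<lambda>u. {u}) ` CAt A"
  by (rule atoms_of_set_algebra) auto

lemma subalg_atom_Sg: "subalg (Sg (CEA E A) (atoms (CEA E A))) (CEA E A)"
  by (rule subalg_Sg) (use subalg_CEA[of E A] atoms_CEA[of E A] in auto)

lemma atom_Sg_subset: "Sg (CEA E A) (atoms (CEA E A)) \<subseteq> Pow (CAt A)"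
  using subalg_atom_Sg[of E A] unfolding subalg_def by auto

lemma singleton_in_atom_Sg: "u \<in> CAt A \<Longrightarrow> {u} \<in> Sg (CEA E A) (atoms (CEA E A))"
  using Sg_superset[of "atoms (CEA E A)"] atoms_CEA[of E A] by auto

lemma atoms_atom_subalgebra_CEA: "atoms (atom_subalgebra (CEA E A)) = atoms (CEA E A)"
  using atoms_of_set_algebra[of "atom_subalgebra (CEA E A)" "CAt A"] atom_Sg_subset[of E A]
    singleton_in_atom_Sg[of _ A E] atoms_CEA[of E A] by auto

lemma atomic_atom_subalgebra_CEA: "atomic (atom_subalgebra (CEA E A))"
  unfolding atomic_def atoms_atom_subalgebra_CEA
proof (intro ballI impI)
  fix X assume X: "X \<in> rcar (atom_subalgebra (CEA E A))" "X \<noteq> rzero (atom_subalgebra (CEA E A))"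
  then obtain u where u: "u \<in> X" by auto
  hence "u \<in> CAt A" using X atom_Sg_subset[of E A] by auto
  thus "\<exists>a\<in>atoms (CEA E A). leq (atom_subalgebra (CEA E A)) a X"
    using u by (auto simp: atoms_CEA leq_CEA)
qed

lemma symmetric_atom_subalgebra_CEA: "symmetric (atom_subalgebra (CEA E A))"
  unfolding symmetric_def by simp

lemma integral_atom_subalgebra_CEA: "integral (atom_subalgebra (CEA E A))"
  unfolding integral_def atoms_atom_subalgebra_CEA by (simp add: atoms_CEA)

lemma generated_by_atoms_atom_subalgebra:
  assumes "subalg (rcar C) C" "atoms (atom_subalgebra C) = atoms C"
  shows "generated_by_atoms (atom_subalgebra C)"
  unfolding generated_by_atoms_def
proof
  have "subalg (Sg C (atoms C)) C" "Sg C (atoms C) \<subseteq> rcar C"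
    using subalg_Sg[OF assms(1)] subalg_Sg[OF assms(1)] unfolding subalg_def
    by (auto simp: atoms_def)
  hence "subalg (Sg C (atoms C)) (atom_subalgebra C)" using subalg_restr_iff by blast
  thus "Sg (atom_subalgebra C) (atoms (atom_subalgebra C)) \<subseteq> rcar (atom_subalgebra C)"
    using Sg_least[OF _ Sg_superset[of "atoms C" C]] assms(2) by simp
  show "rcar (atom_subalgebra C) \<subseteq> Sg (atom_subalgebra C) (atoms (atom_subalgebra C))"
  proof (rule Sg_greatest)
    fix S assume "subalg S (atom_subalgebra C)" "atoms (atom_subalgebra C) \<subseteq> S"
    hence "subalg S C" "atoms C \<subseteq> S"
      using subalg_restr_iff \<open>Sg C (atoms C) \<subseteq> rcar C\<close> assms(2) by auto
    thus "rcar (atom_subalgebra C) \<subseteq> S" using Sg_least by simp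
  qed
qed

lemma at_struct_atom_subalgebra_CEA: "at_struct (CEA E A) = at_struct (atom_subalgebra (CEA E A))"
  unfolding at_struct_def atoms_atom_subalgebra_CEA by (simp add: fun_eq_iff)

lemma bij_betw_singleton_image_Pow:
  "bij_betw (\<lambda>X. (\<lambda>u. {u}) ` X) (Pow U) (Pow ((\<lambda>u. {u}) ` U))"
proof (rule bij_betw_imageI)
  show "inj_on (\<lambda>X. (\<lambda>u. {u}) ` X) (Pow U)" by (rule inj_onI) auto
  have "Y = (\<lambda>u. {u}) ` {u. {u} \<in> Y}" "{u. {u} \<in> Y} \<in> Pow U" if "Y \<in> Pow ((\<lambda>u. {u}) ` U)" for Y
    using that by auto
  thus "(\<lambda>X. (\<lambda>u. {u}) ` X) ` Pow U = Pow ((\<lambda>u. {u}) ` U)" by blast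
qed

lemma iso_Cm_at_struct_CEA: "isomorphic (CEA E A) (Cm (at_struct (CEA E A)))"
proof -
  define f where "f X = (\<lambda>u. {u}) ` X" for X :: "'a catom set"
  let ?S = "at_struct (CEA E A)"
  have S: "ats_at ?S = f (CAt A)"
    "ats_C ?S = {(x, y, z). x \<in> f (CAt A) \<and> y \<in> f (CAt A) \<and> z \<in> f (CAt A) \<and>
       z \<subseteq> rcomp (CEA E A) x y}"
    "ats_cnv ?S = (\<lambda>x. if x \<in> f (CAt A) then x else undefined)"
    "ats_I ?S = {x \<in> f (CAt A). x \<subseteq> {CId}}"
    unfolding at_struct_def atoms_CEA f_def by (auto simp: leq_CEA fun_eq_iff)
  have bij: "bij_betw f (Pow (CAt A)) (Pow (f (CAt A)))"
    unfolding f_def by (rule bij_betw_singleton_image_Pow)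
  have comp: "f (rcomp (CEA E A) X Y) = {z. \<exists>x\<in>f X. \<exists>y\<in>f Y. (x, y, z) \<in> ats_C ?S}"
    if "X \<subseteq> CAt A" "Y \<subseteq> CAt A" for X Y
  proof (intro set_eqI iffI)
    fix z assume "z \<in> f (rcomp (CEA E A) X Y)"
    then obtain u v w where uvw: "z = {w}" "u \<in> X" "v \<in> Y" "Ctri E A u v w" unfolding f_def by auto
    hence "({u}, {v}, z) \<in> ats_C ?S" using Ctri_in_CAt[of E A u v w] unfolding S f_def by auto
    thus "z \<in> {z. \<exists>x\<in>f X. \<exists>y\<in>f Y. (x, y, z) \<in> ats_C ?S}" using uvw unfolding f_def by blast
  next
    fix z assume "z \<in> {z. \<exists>x\<in>f X. \<exists>y\<in>f Y. (x, y, z) \<in> ats_C ?S}"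
    then obtain u v where uv: "u \<in> X" "v \<in> Y" "({u}, {v}, z) \<in> ats_C ?S" unfolding f_def by blast
    then obtain w where w: "z = {w}" "w \<in> rcomp (CEA E A) {u} {v}"
      unfolding S f_def by (auto simp del: CEA_simps)
    hence "Ctri E A u v w" by simp
    thus "z \<in> f (rcomp (CEA E A) X Y)" using uv w unfolding f_def by auto
  qed
  have "iso f (CEA E A) (Cm ?S)"
    unfolding iso_def Cm_def ra.simps S(1,3,4) CEA_simps(1-8)
  proof (intro conjI ballI)
    fix X Y assume "X \<in> Pow (CAt A)" "Y \<in> Pow (CAt A)"
    thus "f (rcomp (CEA E A) X Y) = {z. \<exists>x\<in>f X. \<exists>y\<in>f Y. (x, y, z) \<in> ats_C ?S}"
      using comp by auto
  qed (use bij in \<open>auto simp: f_def\<close>)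
  thus ?thesis unfolding isomorphic_def by blast
qed

lemma complete_CEA: "complete (CEA E A)"
  unfolding complete_def is_lub_def
proof (intro allI impI)
  fix X assume "X \<subseteq> rcar (CEA E A)"
  thus "\<exists>s. s \<in> rcar (CEA E A) \<and> (\<forall>x\<in>X. leq (CEA E A) x s) \<and>
      (\<forall>u\<in>rcar (CEA E A). (\<forall>x\<in>X. leq (CEA E A) x u) \<longrightarrow> leq (CEA E A) s u)"
    by (intro exI[of _ "\<Union>X"]) (auto simp: leq_CEA)
qed

lemma completion_atom_subalgebra_CEA: "completion_of (CEA E A) (atom_subalgebra (CEA E A))"
  unfolding completion_of_def dense_sub_def
proof (intro conjI ballI impI)
  fix X assume "X \<in> rcar (CEA E A)" "X \<noteq> rzero (CEA E A)"
  then obtain u where "u \<in> X" "u \<in> CAt A" by auto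
  thus "\<exists>b\<in>rcar (atom_subalgebra (CEA E A)). b \<noteq> rzero (CEA E A) \<and> leq (CEA E A) b X"
    using singleton_in_atom_Sg[of u A E] by (auto simp: leq_CEA)
qed (simp_all add: complete_CEA subalg_atom_Sg)

lemma almost_same_CEA:
  assumes "X \<subseteq> CAt A" "Y \<subseteq> CAt A" "finite ((X - Y) \<union> (Y - X))"
  shows "almost_same (CEA E A) X Y"
  unfolding almost_same_def
proof (intro exI conjI)
  show "finite ((\<lambda>u. {u}) ` ((X - Y) \<union> (Y - X)))" using assms(3) by simp
  show "(\<lambda>u. {u}) ` ((X - Y) \<union> (Y - X)) \<subseteq> atoms (CEA E A)" using assms(1,2) atoms_CEA[of E A] by auto
  show "is_lub (CEA E A) ((\<lambda>u. {u}) ` ((X - Y) \<union> (Y - X)))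
      (rjoin (CEA E A) (rmeet (CEA E A) X (rcompl (CEA E A) Y)) (rmeet (CEA E A) Y (rcompl (CEA E A) X)))"
    using assms(1,2) unfolding is_lub_def leq_CEA by auto
qed
section \<open>C_E(A) over a special extension\<close>

locale special_extension_setting =
  ra_finite_symmetric_na R + ra_finite_subalgebra R E
  for R :: "'a ra" and E :: "'a set" +
  assumes integral: "integral R" and special: "special_extension E R"
begin

lemma id_atom: "\<one>' \<in> atoms R"
  using integral unfolding integral_def by auto

lemma diversity_atom_iff: "z \<in> diversity_atoms R \<longleftrightarrow> z \<in> atoms R \<and> z \<noteq> \<one>'"
  unfolding diversity_atoms_def using atom_le_compl_iff atom_le_atom id_atom le_refl by fastforce

lemma diversity_atom_car: "z \<in> diversity_atoms R \<Longrightarrow> z \<in> car"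
  using diversity_atom_iff atom_car by auto

lemma finite_diversity_atoms: "finite (diversity_atoms R)"
  using finite_car diversity_atom_car by (meson finite_subset subsetI)

lemma cE_triangle:
  assumes "x \<in> atoms R" "y \<in> atoms R" "z \<in> atoms R" "z \<sqsubseteq> x \<odot> y"
  shows "cE E R z \<sqsubseteq> cE E R x \<odot> cE E R y"
proof -
  have c: "x \<in> car" "y \<in> car" "z \<in> car" "cE E R x \<in> car" "cE E R y \<in> car"
    using assms atom_car cE_atom E_atom_car by auto
  have "x \<odot> y \<sqsubseteq> cE E R x \<odot> cE E R y" using comp_mono le_cE assms c by auto
  hence "z \<sqsubseteq> cE E R x \<odot> cE E R y" using le_trans[OF c(3) _ _ assms(4)] c by auto
  moreover have "cE E R x \<odot> cE E R y \<in> E" using comp_in_E cE_atom atoms_restr assms by auto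
  ultimately show ?thesis using E_atom_le_if_common_atom[OF cE_atom _ assms(3) le_cE] assms by auto
qed

lemma special_triangle_transfer:
  assumes x: "x \<in> diversity_atoms R" and y: "y \<in> diversity_atoms R" and z: "z \<in> diversity_atoms R"
    and zxy: "z \<sqsubseteq> x \<odot> y" and ne: "\<not> (cE E R x = cE E R y \<and> cE E R y = cE E R z)"
    and z': "z' \<in> atoms R" "cE E R z' = cE E R z"
  shows "z' \<sqsubseteq> x \<odot> y"
proof -
  have at: "x \<in> atoms R" "y \<in> atoms R" "z \<in> atoms R" using x y z diversity_atom_iff by auto
  have "cE E R z \<sqsubseteq> x \<odot> y"
    using special[unfolded special_extension_def, rule_format, OF cE_diversity[OF x]
        cE_diversity[OF y] cE_diversity[OF z]] ne cE_triangle[OF at zxy] at le_cE by blast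
  thus ?thesis using le_trans le_cE[OF z'(1)] z' at atom_car E_atom_car cE_atom by (metis comp_car)
qed

lemma special_triangle_witness:
  assumes a: "a \<in> diversity_atoms (restr R E)" "a \<sqsubseteq> a \<odot> a"
    and p: "p \<in> atoms R" "p \<sqsubseteq> a" and z': "z' \<in> atoms R" "z' \<sqsubseteq> a"
  shows "\<exists>q\<in>diversity_atoms R. cE E R q = a \<and> z' \<sqsubseteq> p \<odot> q"
proof -
  have aE: "a \<in> atoms (restr R E)" "a \<sqsubseteq> \<sim>\<one>'" using a unfolding diversity_atoms_def by auto
  have c: "a \<in> car" "p \<in> car" "z' \<in> car" using aE E_atom_car p z' atom_car by auto
  have "p \<odot> z' \<sqinter> a \<noteq> \<zero>"
    using special[unfolded special_extension_def, rule_format, OF a(1) a(1) a(1)] a p z' by blast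
  then obtain q where q: "q \<in> atoms R" "q \<sqsubseteq> p \<odot> z'" "q \<sqsubseteq> a"
    using ex_atom_below_meet c by (meson comp_car)
  have "z' \<sqsubseteq> p \<odot> q" using atom_triangle_rotate[OF p(1) z'(1) q(1) q(2)] .
  moreover have "q \<sqsubseteq> \<sim>\<one>'" using le_trans q aE c atom_car by (metis compl_car id_car)
  hence "q \<in> diversity_atoms R" using q unfolding diversity_atoms_def by auto
  moreover have "cE E R q = a" using cE_eqI q aE by auto
  ultimately show ?thesis by blast
qed

lemma base_atom_atom: "u \<in> CAt R \<Longrightarrow> base_atom R u \<in> atoms R"
  by (cases u) (auto simp: id_atom diversity_atom_iff)

lemma base_atom_car: "u \<in> CAt R \<Longrightarrow> base_atom R u \<in> car"
  using base_atom_atom atom_car by auto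

lemma base_atom_surj: "z \<in> atoms R \<Longrightarrow> \<exists>u\<in>CAt R. base_atom R u = z"
  by (cases "z = \<one>'") (auto simp: diversity_atom_iff intro: bexI[of _ CId] bexI[of _ "CDiv z 0"])

lemma atom_triangle_perms:
  assumes "x \<in> atoms R" "y \<in> atoms R" "z \<in> atoms R" "z \<sqsubseteq> x \<odot> y"
  shows "z \<sqsubseteq> y \<odot> x" "y \<sqsubseteq> x \<odot> z" "y \<sqsubseteq> z \<odot> x" "x \<sqsubseteq> y \<odot> z" "x \<sqsubseteq> z \<odot> y"
proof -
  have c: "x \<in> car" "y \<in> car" "z \<in> car" using assms atom_car by auto
  show zyx: "z \<sqsubseteq> y \<odot> x" using assms c comp_comm by metis
  show "y \<sqsubseteq> x \<odot> z" using atom_triangle_rotate assms by blast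
  thus "y \<sqsubseteq> z \<odot> x" using c comp_comm by metis
  show "x \<sqsubseteq> y \<odot> z" using atom_triangle_rotate[OF assms(2,1,3) zyx] .
  thus "x \<sqsubseteq> z \<odot> y" using c comp_comm by metis
qed

lemma Cbase_triangle:
  "Cbase E R u v w \<Longrightarrow> u \<in> CAt R \<and> v \<in> CAt R \<and> w \<in> CAt R \<and>
     base_atom R w \<sqsubseteq> base_atom R u \<odot> base_atom R v"
  by (cases u; cases v; cases w) (auto simp: le_refl id_comp diversity_atom_car)

lemma Ctri_triangle:
  assumes "Ctri E R u v w"
  shows "u \<in> CAt R \<and> v \<in> CAt R \<and> w \<in> CAt R \<and> base_atom R w \<sqsubseteq> base_atom R u \<odot> base_atom R v"
proof -
  define tri where "tri p q r \<longleftrightarrow> p \<in> CAt R \<and> q \<in> CAt R \<and> r \<in> CAt R \<and>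
     base_atom R r \<sqsubseteq> base_atom R p \<odot> base_atom R q" for p q r
  have swap12: "tri q p r" and swap23: "tri p r q" if "tri p q r" for p q r
    using that atom_triangle_perms(1,2)[OF base_atom_atom base_atom_atom base_atom_atom]
    unfolding tri_def by auto
  have "tri u v w \<or> tri u w v \<or> tri v u w \<or> tri v w u \<or> tri w u v \<or> tri w v u"
    using assms Cbase_triangle unfolding Ctri_def tri_def by blast
  hence "tri u v w" using swap12 swap23 by blast
  thus ?thesis unfolding tri_def .
qed

lemma Ctri_diversity:
  "Ctri E R (CDiv x i) (CDiv y j) (CDiv z k) \<longleftrightarrow>
     x \<in> diversity_atoms R \<and> y \<in> diversity_atoms R \<and> z \<in> diversity_atoms R \<and> z \<sqsubseteq> x \<odot> y \<and>
     (cE E R x = cE E R y \<and> cE E R y = cE E R z \<longrightarrow> Trel i j k)"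
proof
  assume h: "Ctri E R (CDiv x i) (CDiv y j) (CDiv z k)"
  have "cE E R x = cE E R y \<and> cE E R y = cE E R z \<longrightarrow> Trel i j k"
    using h unfolding Ctri_def by (auto simp: Trel_def)
  thus "x \<in> diversity_atoms R \<and> y \<in> diversity_atoms R \<and> z \<in> diversity_atoms R \<and> z \<sqsubseteq> x \<odot> y \<and>
     (cE E R x = cE E R y \<and> cE E R y = cE E R z \<longrightarrow> Trel i j k)"
    using Ctri_triangle[OF h] by simp
qed (simp add: Ctri_def)

text \<open>Triangles of atoms lift to C_E(A) over any given third vertex: give the other two
  vertices the index of the third.\<close>
lemma triangle_lift:
  assumes xy: "x \<in> atoms R" "y \<in> atoms R" and w: "w \<in> CAt R"
    and h: "base_atom R w \<sqsubseteq> x \<odot> y"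
  shows "\<exists>u v. base_atom R u = x \<and> base_atom R v = y \<and> Ctri E R u v w"
proof -
  have c: "x \<in> car" "y \<in> car" using xy atom_car by auto
  have z: "base_atom R w \<in> atoms R" using base_atom_atom w by auto
  show ?thesis
  proof (cases "x = \<one>'")
    case True
    hence "base_atom R w = y" using h z xy atom_le_atom id_comp c by auto
    thus ?thesis using True w Ctri_CId_left by (metis base_atom.simps(1))
  next
    case xI: False
    show ?thesis
    proof (cases "y = \<one>'")
      case True
      hence "base_atom R w = x" using h z xy atom_le_atom comp_id c by auto
      thus ?thesis using True w Ctri_CId_right by (metis base_atom.simps(1))
    next
      case yI: False
      have xd: "x \<in> diversity_atoms R" "y \<in> diversity_atoms R" using xI yI xy diversity_atom_iff by auto
      show ?thesis
      proof (cases w)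
        case CId
        hence "y \<sqsubseteq> x \<odot> \<one>'" using atom_triangle_perms(2)[OF xy id_atom] h by simp
        hence "y = x" using comp_id c atom_le_atom xy by auto
        thus ?thesis using Ctri_diversity_diagonal[OF xd(1)] CId by (metis base_atom.simps(2))
      next
        case (CDiv z k)
        have "Ctri E R (CDiv x k) (CDiv y k) w"
          using Ctri_diversity xd w h CDiv by (simp add: Trel_diagonal)
        thus ?thesis by (metis base_atom.simps(2))
      qed
    qed
  qed
qed

abbreviation J where "J a \<equiv> Jfun R a 0"

lemma J_subset: "J a \<subseteq> CAt R"
  unfolding Jfun_def CAt_def by auto

lemma J_mem: "u \<in> CAt R \<Longrightarrow> u \<in> J a \<longleftrightarrow> base_atom R u \<sqsubseteq> a"
  by (cases u) (auto simp: Jfun_def)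

lemma J_inj_on: "inj_on J car"
proof (rule inj_onI, rule ccontr)
  have le_if_J_eq: "a \<sqsubseteq> b" if ab: "a \<in> car" "b \<in> car" "J a = J b" for a b
  proof (rule ccontr)
    assume "\<not> a \<sqsubseteq> b"
    hence "a \<sqinter> \<sim>b \<noteq> \<zero>" using not_le_iff_meet_compl ab by auto
    then obtain z where z: "z \<in> atoms R" "z \<sqsubseteq> a" "z \<sqsubseteq> \<sim>b"
      using ex_atom_below_meet[of a "\<sim>b"] ab by auto
    obtain u where "u \<in> CAt R" "base_atom R u = z" using base_atom_surj z by auto
    thus False using J_mem ab z atom_le_compl_iff by metis
  qed
  fix a b assume "a \<in> car" "b \<in> car" "J a = J b" "a \<noteq> b"
  thus False using le_if_J_eq le_antisym by metis
qed

lemma J_zero: "J \<zero> = {}"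
  using J_subset J_mem base_atom_atom atom_nonzero le_zero_iff base_atom_car by blast

lemma J_one: "J \<one> = CAt R"
  using J_subset J_mem le_one base_atom_car by blast

lemma J_id: "J \<one>' = {CId}"
proof -
  have "\<not> x \<sqsubseteq> \<one>'" if "x \<in> diversity_atoms R" for x
    using that diversity_atom_iff atom_le_atom id_atom by blast
  hence "u \<in> J \<one>' \<longleftrightarrow> u = CId" for u
    by (cases u) (auto simp: Jfun_def le_refl)
  thus ?thesis by auto
qed

lemma J_compl: "a \<in> car \<Longrightarrow> J (\<sim>a) = CAt R - J a"
  using J_subset J_mem atom_le_compl_iff base_atom_atom by blast

lemma J_join: "a \<in> car \<Longrightarrow> b \<in> car \<Longrightarrow> J (a \<squnion> b) = J a \<union> J b"
  using J_subset J_mem atom_le_join_iff base_atom_atom by blast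

lemma J_meet:
  assumes "a \<in> car" "b \<in> car"
  shows "J (a \<sqinter> b) = J a \<inter> J b"
proof -
  have "u \<in> J (a \<sqinter> b) \<longleftrightarrow> u \<in> J a \<and> u \<in> J b" if "u \<in> CAt R" for u
    using that J_mem le_meetI le_meetD base_atom_car assms by (meson meet_car)
  thus ?thesis using J_subset by blast
qed

lemma J_comp:
  assumes ab: "a \<in> car" "b \<in> car"
  shows "J (a \<odot> b) = rcomp (CEA E R) (J a) (J b)"
proof (intro set_eqI iffI)
  fix w assume w: "w \<in> J (a \<odot> b)"
  hence wC: "w \<in> CAt R" using J_subset by auto
  obtain x y where xy: "x \<in> atoms R" "y \<in> atoms R" "x \<sqsubseteq> a" "y \<sqsubseteq> b" "base_atom R w \<sqsubseteq> x \<odot> y"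
    using atom_below_comp_decompose[OF base_atom_atom[OF wC] ab] w wC J_mem by auto
  obtain u v where uv: "base_atom R u = x" "base_atom R v = y" "Ctri E R u v w"
    using triangle_lift[OF xy(1,2) wC xy(5)] by blast
  have "u \<in> J a" "v \<in> J b" using J_mem Ctri_triangle[OF uv(3)] uv xy by auto
  thus "w \<in> rcomp (CEA E R) (J a) (J b)" using uv(3) by auto
next
  fix w assume "w \<in> rcomp (CEA E R) (J a) (J b)"
  then obtain u v where uv: "u \<in> J a" "v \<in> J b" "Ctri E R u v w" by auto
  note t = Ctri_triangle[OF uv(3)]
  have "base_atom R u \<sqsubseteq> a" "base_atom R v \<sqsubseteq> b" using J_mem uv t by auto
  hence "base_atom R u \<odot> base_atom R v \<sqsubseteq> a \<odot> b"
    using comp_mono base_atom_car t ab by auto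
  hence "base_atom R w \<sqsubseteq> a \<odot> b" using le_trans base_atom_car t ab by (meson comp_car)
  thus "w \<in> J (a \<odot> b)" using J_mem t by auto
qed

lemma subalg_J_image:
  assumes S: "subalg S R"
  shows "subalg (J ` S) (CEA E R)"
  unfolding subalg_def
proof (intro conjI ballI)
  have S_car: "S \<subseteq> car" and closed: "\<zero> \<in> S" "\<one> \<in> S" "\<one>' \<in> S"
    "\<And>a. a \<in> S \<Longrightarrow> \<sim>a \<in> S"
    "\<And>a b. a \<in> S \<Longrightarrow> b \<in> S \<Longrightarrow> a \<squnion> b \<in> S \<and> a \<sqinter> b \<in> S \<and> a \<odot> b \<in> S"
    using S unfolding subalg_def by auto
  show "J ` S \<subseteq> rcar (CEA E R)" using J_subset by auto
  have "J \<zero> \<in> J ` S" "J \<one> \<in> J ` S" "J \<one>' \<in> J ` S" using closed(1-3) by auto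
  thus "rzero (CEA E R) \<in> J ` S" "rone (CEA E R) \<in> J ` S" "rid (CEA E R) \<in> J ` S"
    by (simp_all add: J_zero J_one J_id)
  fix X assume "X \<in> J ` S"
  then obtain a where a: "a \<in> S" "X = J a" by auto
  show "rcompl (CEA E R) X \<in> J ` S" "rconv (CEA E R) X \<in> J ` S"
    using a closed(4) J_compl S_car by auto
  fix Y assume "Y \<in> J ` S"
  then obtain b where b: "b \<in> S" "Y = J b" by auto
  have ab: "a \<in> car" "b \<in> car" using a b S_car by auto
  have "J (a \<squnion> b) \<in> J ` S" "J (a \<sqinter> b) \<in> J ` S" "J (a \<odot> b) \<in> J ` S"
    using closed(5)[OF a(1) b(1)] by auto
  thus "rjoin (CEA E R) X Y \<in> J ` S" "rmeet (CEA E R) X Y \<in> J ` S" "rcomp (CEA E R) X Y \<in> J ` S"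
    unfolding a(2) b(2) J_join[OF ab] J_meet[OF ab] J_comp[OF ab] by simp_all
qed

lemma iso_J_image:
  assumes "S \<subseteq> car"
  shows "iso J (restr R S) (restr (CEA E R) (J ` S))"
  unfolding iso_def
proof (intro conjI ballI)
  show "bij_betw J (rcar (restr R S)) (rcar (restr (CEA E R) (J ` S)))"
    using inj_on_subset[OF J_inj_on assms] by (simp add: bij_betw_def)
qed (use assms in \<open>auto simp: J_zero J_one J_id J_compl J_join J_meet J_comp subset_iff\<close>)

section \<open>Uniform elements\<close>

definition uniform :: "nat \<Rightarrow> 'a catom set \<Rightarrow> bool" where
  "uniform N X \<longleftrightarrow> X \<subseteq> CAt R \<and>
    (\<forall>z z' k k'. z \<in> diversity_atoms R \<longrightarrow> z' \<in> diversity_atoms R \<longrightarrow> N \<le> k \<longrightarrow> N \<le> k' \<longrightarrow>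
       cE E R z = cE E R z' \<longrightarrow> CDiv z k \<in> X \<longrightarrow> CDiv z' k' \<in> X)"

lemma uniformD:
  "uniform N X \<Longrightarrow> CDiv z k \<in> X \<Longrightarrow> z \<in> diversity_atoms R \<Longrightarrow> z' \<in> diversity_atoms R \<Longrightarrow>
    N \<le> k \<Longrightarrow> N \<le> k' \<Longrightarrow> cE E R z = cE E R z' \<Longrightarrow> CDiv z' k' \<in> X"
  unfolding uniform_def by blast

lemma uniform_subset: "uniform N X \<Longrightarrow> X \<subseteq> CAt R"
  unfolding uniform_def by blast

lemma uniform_mono: "uniform N X \<Longrightarrow> N \<le> M \<Longrightarrow> uniform M X"
  unfolding uniform_def by (meson order_trans)

lemma uniform_empty: "uniform N {}"
  and uniform_CAt: "uniform N (CAt R)"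
  and uniform_CId: "uniform N {CId}"
  unfolding uniform_def by auto

lemma uniform_singleton: "u \<in> CAt R \<Longrightarrow> uniform (Suc (case u of CId \<Rightarrow> 0 | CDiv z i \<Rightarrow> i)) {u}"
  unfolding uniform_def by (cases u) auto

lemma uniform_diff: "uniform N X \<Longrightarrow> uniform N (CAt R - X)"
  unfolding uniform_def by (metis Diff_iff Diff_subset CAt_CDiv)

lemma uniform_union: "uniform N X \<Longrightarrow> uniform N Y \<Longrightarrow> uniform N (X \<union> Y)"
  and uniform_inter: "uniform N X \<Longrightarrow> uniform N Y \<Longrightarrow> uniform N (X \<inter> Y)"
  unfolding uniform_def by blast+

lemma uniform_min_index:
  assumes "uniform N X" "CDiv x i \<in> X" "x \<in> diversity_atoms R" "N \<le> k"
  shows "CDiv x (min i k) \<in> X"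
  using assms uniformD[OF assms(1,2,3,3)] by (cases "N \<le> i") (auto simp: min_def)

text \<open>Inside a single E-atom a, condition (2) of a special extension supplies a new vertex q
  below a, and the relation T lets it carry the large index k'.\<close>
lemma uniform_comp_within_E_atom:
  assumes X: "uniform N X" and Y: "uniform N Y"
    and uv: "CDiv x i \<in> X" "CDiv y j \<in> Y"
    and div: "x \<in> diversity_atoms R" "y \<in> diversity_atoms R" "z \<in> diversity_atoms R"
    and zxy: "z \<sqsubseteq> x \<odot> y" and T: "Trel i j k" and k: "N \<le> k" "N \<le> k'"
    and z': "z' \<in> diversity_atoms R"
    and cE_a: "cE E R x = a" "cE E R y = a" "cE E R z = a" "cE E R z' = a"
  shows "CDiv z' k' \<in> rcomp (CEA E R) X Y"
proof -
  have at: "x \<in> atoms R" "y \<in> atoms R" "z \<in> atoms R" "z' \<in> atoms R"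
    using div z' diversity_atom_iff by auto
  have a: "a \<in> diversity_atoms (restr R E)" "a \<sqsubseteq> a \<odot> a"
    using cE_diversity[OF div(3)] cE_triangle[OF at(1-3) zxy] cE_a by auto
  have le_a: "x \<sqsubseteq> a" "y \<sqsubseteq> a" "z' \<sqsubseteq> a"
    using le_cE[OF at(1)] le_cE[OF at(2)] le_cE[OF at(4)] cE_a by simp_all
  have "N \<le> j \<or> N \<le> i" using Trel_lower_bound[OF T k(1)] by auto
  thus ?thesis
  proof
    assume j: "N \<le> j"
    obtain q where q: "q \<in> diversity_atoms R" "cE E R q = a" "z' \<sqsubseteq> x \<odot> q"
      using special_triangle_witness[OF a at(1) le_a(1) at(4) le_a(3)] by blast
    have "CDiv x (min i k') \<in> X" using uniform_min_index[OF X uv(1) div(1) k(2)] .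
    moreover have "CDiv q k' \<in> Y" using uniformD[OF Y uv(2) div(2) q(1) j k(2)] q(2) cE_a by simp
    moreover have "Ctri E R (CDiv x (min i k')) (CDiv q k') (CDiv z' k')"
      using div q z' cE_a by (simp add: Ctri_diversity Trel_le_eq)
    ultimately show ?thesis by auto
  next
    assume i: "N \<le> i"
    obtain q where q: "q \<in> diversity_atoms R" "cE E R q = a" "z' \<sqsubseteq> y \<odot> q"
      using special_triangle_witness[OF a at(2) le_a(2) at(4) le_a(3)] by blast
    have "z' \<sqsubseteq> q \<odot> y" using q(3) comp_comm[of y q] at(2) atom_car diversity_atom_car[OF q(1)] by simp
    hence "Ctri E R (CDiv q k') (CDiv y (min j k')) (CDiv z' k')"
      using div q z' cE_a by (simp add: Ctri_diversity Trel_eq_le)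
    moreover have "CDiv q k' \<in> X" using uniformD[OF X uv(1) div(1) q(1) i k(2)] q(2) cE_a by simp
    moreover have "CDiv y (min j k') \<in> Y" using uniform_min_index[OF Y uv(2) div(2) k(2)] .
    ultimately show ?thesis by auto
  qed
qed

lemma uniform_comp_diversity:
  assumes X: "uniform N X" and Y: "uniform N Y"
    and uv: "CDiv x i \<in> X" "CDiv y j \<in> Y" and tri: "Ctri E R (CDiv x i) (CDiv y j) (CDiv z k)"
    and k: "N \<le> k" "N \<le> k'" and z': "z' \<in> diversity_atoms R" "cE E R z' = cE E R z"
  shows "CDiv z' k' \<in> rcomp (CEA E R) X Y"
proof -
  have div: "x \<in> diversity_atoms R" "y \<in> diversity_atoms R" "z \<in> diversity_atoms R"
    and zxy: "z \<sqsubseteq> x \<odot> y" and T: "cE E R x = cE E R y \<and> cE E R y = cE E R z \<longrightarrow> Trel i j k"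
    using tri unfolding Ctri_diversity by auto
  show ?thesis
  proof (cases "cE E R x = cE E R y \<and> cE E R y = cE E R z")
    case False
    have "z' \<sqsubseteq> x \<odot> y"
      using special_triangle_transfer[OF div zxy False _ z'(2)] z'(1) diversity_atom_iff by blast
    hence "Ctri E R (CDiv x i) (CDiv y j) (CDiv z' k')" using div z' False by (auto simp: Ctri_diversity)
    thus ?thesis using uv by auto
  next
    case True
    thus ?thesis
      using uniform_comp_within_E_atom[OF X Y uv div zxy _ k z'(1), where a = "cE E R z"] T z'(2) by auto
  qed
qed

lemma uniform_comp:
  assumes X: "uniform N X" and Y: "uniform N Y"
  shows "uniform N (rcomp (CEA E R) X Y)"
  unfolding uniform_def
proof (intro conjI allI impI)
  show "rcomp (CEA E R) X Y \<subseteq> CAt R" by (rule CEA_comp_subset)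
  fix z z' k k'
  assume z: "z \<in> diversity_atoms R" and z': "z' \<in> diversity_atoms R" and k: "N \<le> k" "N \<le> k'"
    and c: "cE E R z = cE E R z'" and "CDiv z k \<in> rcomp (CEA E R) X Y"
  then obtain u v where uv: "u \<in> X" "v \<in> Y" "Ctri E R u v (CDiv z k)" by auto
  show "CDiv z' k' \<in> rcomp (CEA E R) X Y"
  proof (cases u)
    case CId
    hence "CDiv z' k' \<in> Y" using uv Ctri_CId_left[of E R v] uniformD[OF Y _ z z' k c] by auto
    moreover have "Ctri E R CId (CDiv z' k') (CDiv z' k')" using z' by (simp add: Ctri_CId_left)
    ultimately show ?thesis using uv(1) CId by auto
  next
    case (CDiv x i)
    show ?thesis
    proof (cases v)
      case CId
      hence "CDiv z' k' \<in> X" using uv Ctri_CId_right[of E R u] uniformD[OF X _ z z' k c] by auto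
      moreover have "Ctri E R (CDiv z' k') CId (CDiv z' k')" using z' by (simp add: Ctri_CId_right)
      ultimately show ?thesis using uv(2) CId by auto
    next
      case (CDiv y j)
      thus ?thesis using uniform_comp_diversity[OF X Y] uv \<open>u = CDiv x i\<close> k z' c by auto
    qed
  qed
qed

lemma subalg_uniform_level: "subalg {X. uniform N X} (CEA E R)"
  unfolding subalg_def
proof (intro conjI ballI)
  show "{X. uniform N X} \<subseteq> rcar (CEA E R)" using uniform_subset by auto
  show "rzero (CEA E R) \<in> {X. uniform N X}" "rone (CEA E R) \<in> {X. uniform N X}"
    "rid (CEA E R) \<in> {X. uniform N X}"
    using uniform_empty uniform_CAt uniform_CId by simp_all
  fix X assume X: "X \<in> {X. uniform N X}"
  thus "rcompl (CEA E R) X \<in> {X. uniform N X}" "rconv (CEA E R) X \<in> {X. uniform N X}"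
    using uniform_diff by simp_all
  fix Y assume Y: "Y \<in> {X. uniform N X}"
  show "rjoin (CEA E R) X Y \<in> {X. uniform N X}" "rmeet (CEA E R) X Y \<in> {X. uniform N X}"
    using X Y uniform_union uniform_inter by simp_all
  show "rcomp (CEA E R) X Y \<in> {X. uniform N X}"
    using X Y uniform_comp by (simp only: mem_Collect_eq)
qed

lemma subalg_uniform: "subalg {X. \<exists>N. uniform N X} (CEA E R)"
proof -
  have "mono (\<lambda>N. {X. uniform N X})" by (rule monoI) (auto intro: uniform_mono)
  hence "subalg (\<Union>N. {X. uniform N X}) (CEA E R)" by (rule subalg_UN_mono[OF subalg_uniform_level])
  moreover have "(\<Union>N. {X. uniform N X}) = {X. \<exists>N. uniform N X}" by blast
  ultimately show ?thesis by simp
qed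

lemma atom_Sg_uniform:
  assumes "X \<in> Sg (CEA E R) (atoms (CEA E R))"
  shows "\<exists>N. uniform N X"
proof -
  have "atoms (CEA E R) \<subseteq> {X. \<exists>N. uniform N X}" using atoms_CEA[of E R] uniform_singleton by auto
  thus ?thesis using Sg_least[OF subalg_uniform] assms by blast
qed

lemma uniform_common_bound: "finite F \<Longrightarrow> \<forall>X\<in>F. \<exists>N. uniform N X \<Longrightarrow> \<exists>N. \<forall>X\<in>F. uniform N X"
proof (induction F rule: finite_induct)
  case (insert X F)
  then obtain N M where "\<forall>Y\<in>F. uniform N Y" "uniform M X" by auto
  hence "\<forall>Y\<in>insert X F. uniform (max N M) Y" using uniform_mono by auto
  thus ?case by blast
qed simp

definition lower_atoms :: "nat \<Rightarrow> 'a catom set" where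
  "lower_atoms N = insert CId {CDiv z i | z i. z \<in> diversity_atoms R \<and> i < N}"

lemma finite_lower_atoms: "finite (lower_atoms N)"
proof -
  have "{CDiv z i | z i. z \<in> diversity_atoms R \<and> i < N} =
      (\<lambda>(z, i). CDiv z i) ` (diversity_atoms R \<times> {..<N})" by auto
  thus ?thesis unfolding lower_atoms_def using finite_diversity_atoms by simp
qed

lemma CAt_not_lower_atoms:
  "u \<in> CAt R \<Longrightarrow> u \<notin> lower_atoms N \<Longrightarrow> \<exists>z k. u = CDiv z k \<and> z \<in> diversity_atoms R \<and> N \<le> k"
  unfolding lower_atoms_def by (cases u) auto

lemma uniform_decompose:
  assumes X: "uniform N X"
  shows "X = X \<inter> lower_atoms N \<union> {CDiv z k | z k. z \<in> diversity_atoms R \<and> N \<le> k \<and>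
      cE E R z \<in> cE E R ` {z' \<in> diversity_atoms R. CDiv z' N \<in> X}}"
proof (intro set_eqI iffI)
  fix u assume u: "u \<in> X"
  show "u \<in> X \<inter> lower_atoms N \<union> {CDiv z k | z k. z \<in> diversity_atoms R \<and> N \<le> k \<and>
      cE E R z \<in> cE E R ` {z' \<in> diversity_atoms R. CDiv z' N \<in> X}}"
  proof (cases "u \<in> lower_atoms N")
    case False
    then obtain z k where zk: "u = CDiv z k" "z \<in> diversity_atoms R" "N \<le> k"
      using CAt_not_lower_atoms uniform_subset[OF X] u by blast
    hence "CDiv z N \<in> X" using uniformD[OF X] u by blast
    thus ?thesis using zk by blast
  qed (use u in auto)
next
  fix u assume "u \<in> X \<inter> lower_atoms N \<union> {CDiv z k | z k. z \<in> diversity_atoms R \<and> N \<le> k \<and>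
      cE E R z \<in> cE E R ` {z' \<in> diversity_atoms R. CDiv z' N \<in> X}}"
  then consider "u \<in> X"
    | z k z' where "u = CDiv z k" "z \<in> diversity_atoms R" "N \<le> k" "z' \<in> diversity_atoms R"
        "CDiv z' N \<in> X" "cE E R z = cE E R z'"
    by (auto simp: image_iff)
  thus "u \<in> X"
  proof cases
    case (2 z k z')
    thus ?thesis using uniformD[OF X 2(5,4,2) order_refl 2(3) 2(6)[symmetric]] by simp
  qed
qed

lemma finite_uniform: "finite {X. uniform N X}"
proof -
  define F where "F = (\<lambda>(L, P). L \<union> {CDiv z k | z k. z \<in> diversity_atoms R \<and> N \<le> k \<and> cE E R z \<in> P})"
  have "{X. uniform N X} \<subseteq> F ` (Pow (lower_atoms N) \<times> Pow (cE E R ` diversity_atoms R))"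
  proof
    fix X assume "X \<in> {X. uniform N X}"
    hence "X = F (X \<inter> lower_atoms N, cE E R ` {z' \<in> diversity_atoms R. CDiv z' N \<in> X})"
      unfolding F_def case_prod_conv by (intro uniform_decompose) simp
    moreover have "(X \<inter> lower_atoms N, cE E R ` {z' \<in> diversity_atoms R. CDiv z' N \<in> X})
        \<in> Pow (lower_atoms N) \<times> Pow (cE E R ` diversity_atoms R)" by auto
    ultimately show "X \<in> F ` (Pow (lower_atoms N) \<times> Pow (cE E R ` diversity_atoms R))"
      by (simp add: rev_image_eqI)
  qed
  moreover have "finite (F ` (Pow (lower_atoms N) \<times> Pow (cE E R ` diversity_atoms R)))"
    by (intro finite_imageI finite_cartesian_product) (simp_all add: finite_lower_atoms finite_diversity_atoms)
  ultimately show ?thesis by (rule finite_subset)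
qed

lemma countable_atom_Sg: "countable (Sg (CEA E R) (atoms (CEA E R)))"
proof -
  have "Sg (CEA E R) (atoms (CEA E R)) \<subseteq> (\<Union>N. {X. uniform N X})" using atom_Sg_uniform by blast
  moreover have "countable (\<Union>N. {X. uniform N X})"
    by (rule countable_UN) (simp_all add: countable_finite finite_uniform)
  ultimately show ?thesis by (rule countable_subset)
qed

lemma finite_Sg_atom_subalgebra:
  assumes X: "X \<subseteq> Sg (CEA E R) (atoms (CEA E R))" "finite X"
  shows "finite (Sg (atom_subalgebra (CEA E R)) X)"
proof -
  have "\<forall>Y\<in>X. \<exists>N. uniform N Y" using X(1) atom_Sg_uniform by blast
  then obtain N where N: "\<forall>Y\<in>X. uniform N Y" using uniform_common_bound[OF X(2)] by blast
  let ?T = "Sg (CEA E R) (atoms (CEA E R)) \<inter> {Y. uniform N Y}"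
  have "subalg ?T (CEA E R)" using subalg_Int[OF subalg_atom_Sg subalg_uniform_level] .
  hence "subalg ?T (atom_subalgebra (CEA E R))"
    using subalg_restr_iff[of "Sg (CEA E R) (atoms (CEA E R))" "CEA E R" ?T] atom_Sg_subset[of E R] by simp
  moreover have "X \<subseteq> ?T" using X(1) N by auto
  ultimately have "Sg (atom_subalgebra (CEA E R)) X \<subseteq> ?T" by (rule Sg_least)
  hence "Sg (atom_subalgebra (CEA E R)) X \<subseteq> {Y. uniform N Y}" by blast
  thus ?thesis using finite_uniform by (rule finite_subset)
qed

lemma uniform_agrees_with_J:
  assumes X: "uniform N X"
  shows "\<exists>e\<in>E. \<forall>z k. z \<in> diversity_atoms R \<longrightarrow> N \<le> k \<longrightarrow> (CDiv z k \<in> X \<longleftrightarrow> CDiv z k \<in> J e)"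
proof -
  define P where "P = cE E R ` {z \<in> diversity_atoms R. CDiv z N \<in> X}"
  have "finite P" unfolding P_def using finite_diversity_atoms by simp
  moreover have "P \<subseteq> atoms (restr R E)" unfolding P_def using cE_atom diversity_atom_iff by auto
  ultimately have P: "finite P" "P \<subseteq> atoms (restr R E)" by auto
  moreover have "P \<subseteq> E" using P(2) atoms_restr by auto
  ultimately obtain e where e: "e \<in> E" "\<forall>z\<in>atoms R. z \<sqsubseteq> e \<longleftrightarrow> (\<exists>p\<in>P. z \<sqsubseteq> p)"
    using ex_E_join_of_finite by blast
  have "CDiv z k \<in> X \<longleftrightarrow> CDiv z k \<in> J e" if z: "z \<in> diversity_atoms R" "N \<le> k" for z k
  proof -
    have za: "z \<in> atoms R" using z diversity_atom_iff by auto
    have "CDiv z k \<in> J e \<longleftrightarrow> (\<exists>p\<in>P. z \<sqsubseteq> p)" using J_mem z e za by auto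
    also have "\<dots> \<longleftrightarrow> cE E R z \<in> P" using cE_eqI[OF za] P le_cE[OF za] by auto
    also have "\<dots> \<longleftrightarrow> CDiv z N \<in> X"
      unfolding P_def using uniformD[OF X _ _ z(1) order_refl order_refl] z(1) by auto
    also have "\<dots> \<longleftrightarrow> CDiv z k \<in> X" using uniformD[OF X _ z(1) z(1)] z(2) by auto
    finally show ?thesis by simp
  qed
  thus ?thesis using e(1) by blast
qed

lemma almost_same_J:
  assumes X: "uniform N X"
  shows "\<exists>e\<in>E. almost_same (CEA E R) X (J e)"
proof -
  obtain e where e: "e \<in> E"
    and agree: "\<forall>z k. z \<in> diversity_atoms R \<longrightarrow> N \<le> k \<longrightarrow> (CDiv z k \<in> X \<longleftrightarrow> CDiv z k \<in> J e)"
    using uniform_agrees_with_J[OF X] by blast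
  have "(X - J e) \<union> (J e - X) \<subseteq> lower_atoms N"
    using CAt_not_lower_atoms agree uniform_subset[OF X] J_subset by blast
  hence "almost_same (CEA E R) X (J e)"
    using almost_same_CEA[OF uniform_subset[OF X] J_subset] finite_subset[OF _ finite_lower_atoms] by blast
  thus ?thesis using e by blast
qed

end

theorem theorem1:
  fixes A :: "'a ra" and E :: "'a set"
  assumes "is_RA A" and "finite (rcar A)" and "symmetric A" and "integral A"
    and "subalg E A"
    and "is_RA (restr A E)" and "finite E" and "symmetric (restr A E)" and "integral (restr A E)"
    and "special_extension E A"
  defines "C \<equiv> CEA E A"
  defines "B \<equiv> restr (CEA E A) (Sg (CEA E A) (atoms (CEA E A)))"
  defines "E' \<equiv> (\<lambda>a. Jfun A a 0) ` E"
  defines "A' \<equiv> (\<lambda>a. Jfun A a 0) ` rcar A"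
  shows
    "(countable (rcar B) \<and> atomic B \<and> symmetric B \<and> integral B \<and> generated_by_atoms B)
     \<and> at_struct C = at_struct B
     \<and> isomorphic C (Cm (at_struct B))
     \<and> completion_of C B
     \<and> (subalg E' C \<and> subalg A' C \<and> E' \<subseteq> A'
         \<and> iso (\<lambda>a. Jfun A a 0) (restr A E) (restr C E')
         \<and> iso (\<lambda>a. Jfun A a 0) A (restr C A'))
     \<and> (\<forall>X. X \<subseteq> rcar B \<and> finite X \<longrightarrow> finite (Sg B X))
     \<and> (\<forall>b\<in>rcar B. \<exists>e\<in>E'. almost_same C b e)"
proof -
  interpret special_extension_setting A E
    by unfold_locales (use assms in \<open>auto simp: is_RA_def is_NA_def\<close>)
  have i: "countable (rcar B) \<and> atomic B \<and> symmetric B \<and> integral B \<and> generated_by_atoms B"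
    unfolding B_def
    using countable_atom_Sg atomic_atom_subalgebra_CEA[of E A] symmetric_atom_subalgebra_CEA[of E A]
      integral_atom_subalgebra_CEA[of E A]
      generated_by_atoms_atom_subalgebra[OF subalg_CEA atoms_atom_subalgebra_CEA[of E A]] by simp
  have ii: "at_struct C = at_struct B"
    unfolding B_def C_def by (rule at_struct_atom_subalgebra_CEA)
  have v: "iso J A (restr C A')"
    using iso_J_image[OF order_refl] unfolding restr_rcar C_def A'_def .
  have vi: "\<forall>X. X \<subseteq> rcar B \<and> finite X \<longrightarrow> finite (Sg B X)"
    unfolding B_def using finite_Sg_atom_subalgebra by auto
  have vii: "\<forall>b\<in>rcar B. \<exists>e\<in>E'. almost_same C b e"
    unfolding B_def C_def E'_def using atom_Sg_uniform almost_same_J by force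
  show ?thesis
    using i ii v vi vii iso_Cm_at_struct_CEA[of E A] completion_atom_subalgebra_CEA[of E A]
      subalg_J_image[OF subalgebra] subalg_J_image[OF subalg_car] iso_J_image[OF E_subset] E_subset
    unfolding C_def B_def E'_def A'_def by (simp add: image_mono)
qed

end
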